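(* Let $p\ge 2$, let $F$ be a distribution on $\mathbb{R}^p$, let $X\sim F$, let $X_1,X_2,\ldots$ be independent random vectors with distribution $F$, let $\mathbb{X}_n=(X_1,\ldots,X_n)^T$, let $t\in\mathbb{R}^p$, and let $(t_n)_{n\in\mathbb{N}}$ be a sequence of random $p$-vectors (defined on the same probability space as the $X_i$). Suppose that (I) $E|t_n-t|^4=O(n^{-2})$ as $n\to\infty$, (II) $E|X-t|^{-3/2}<\infty$, and (III) $\sqrt{n}\begin{pmatrix} t_n-t\\ \mathrm{vec}\{S_n(\mathbb{X}_n,t)-S(F,t)\}\end{pmatrix}\to N_{p+p^2}(0,\Xi)$ in distribution, for some symmetric $p(p+1)\times p(p+1)$ matrix $\Xi$. Then $\sqrt{n}\,\mathrm{vec}\{S_n(\mathbb{X}_n,t_n)-S(F,t)\}\to N_{p^2}(0,A\Xi A^T)$ in distribution, where $A=(B,\,I_{p^2})\in\mathbb{R}^{p^2\times p(p+1)}$, $I_{p^2}$ is the $p^2\times p^2$ identity matrix, and $B\in\mathbb{R}^{p^2\times p}$ is given by $$B=2E\left[\frac{\{(X-t)\otimes(X-t)\}(X-t)^T}{|X-t|^4}\right]-E\left\{\frac{X-t}{|X-t|^2}\right\}\otimes I_p-I_p\otimes E\left\{\frac{X-t}{|X-t|^2}\right\}.$$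
   Context: $|\cdot|$ denotes the Euclidean norm on $\mathbb{R}^p$; $\otimes$ denotes the Kronecker product. The spatial sign of $x\in\mathbb{R}^p$ is $s(x)=x/|x|$ for $x\neq 0$ and $s(0)=0$. For $X\sim F$ and $t\in\mathbb{R}^p$, $S(F,t)=E\{s(X-t)s(X-t)^T\}$. For a (possibly random) $u\in\mathbb{R}^p$, $S_n(\mathbb{X}_n,u)=\frac1n\sum_{i=1}^n s(X_i-u)s(X_i-u)^T$. For a matrix $M\in\mathbb{R}^{m\times n}$, $\mathrm{vec}\,M$ is the $mn$-vector obtained by stacking the columns of $M$ from left to right underneath each other. $N_k(0,\Sigma)$ denotes the $k$-variate normal distribution with mean $0$ and covariance $\Sigma$. *)

theory Defs
  imports "HOL-Probability.Probability"
begin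

text \<open>Spatial sign: the library's sgn on real vectors is exactly x / |x| with sgn 0 = 0.
  Outer product s(x) s(x)^T.\<close>
definition outer :: "real^'p \<Rightarrow> real^'p \<Rightarrow> real^'p^'p" where
  "outer a b = (\<chi> i j. a $ i * b $ j)"

definition sign_outer :: "real^'p \<Rightarrow> real^'p^'p" where
  "sign_outer x = outer (sgn x) (sgn x)"

definition S_pop :: "(real^'p) measure \<Rightarrow> real^'p \<Rightarrow> real^'p^'p" where
  "S_pop F t = (\<integral>x. sign_outer (x - t) \<partial>F)"

definition S_emp :: "(nat \<Rightarrow> 'a \<Rightarrow> real^'p) \<Rightarrow> nat \<Rightarrow> ('a \<Rightarrow> real^'p) \<Rightarrow> 'a \<Rightarrow> real^'p^'p" where
  "S_emp X n u \<omega> = (1 / real n) *\<^sub>R (\<Sum>i\<in>{1..n}. sign_outer (X i \<omega> - u \<omega>))"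

text \<open>vec of a matrix; the index (i,j) corresponds to linear position (j-1)m+i,
  i.e. columns stacked.\<close>
definition vecm :: "real^'n^'m \<Rightarrow> real^('m \<times> 'n)" where
  "vecm M = (\<chi> ij. M $ fst ij $ snd ij)"

text \<open>Kronecker product of column vectors a (m-vector) and b (r-vector), consistent with
  the index convention of vecm: entry (l,k) is at linear position (k-1)r+l and equals a_k b_l.\<close>
definition kron_vec :: "real^'m \<Rightarrow> real^'r \<Rightarrow> real^('r \<times> 'm)" where
  "kron_vec a b = (\<chi> lk. a $ snd lk * b $ fst lk)"

definition kron_vec_I :: "real^'p \<Rightarrow> real^'p^('p \<times> 'p)" where
  "kron_vec_I u = (\<chi> lk. \<chi> m. u $ snd lk * (if fst lk = m then 1 else 0))"

definition kron_I_vec :: "real^'p \<Rightarrow> real^'p^('p \<times> 'p)" where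
  "kron_I_vec u = (\<chi> lk. \<chi> m. (if snd lk = m then 1 else 0) * u $ fst lk)"

definition colrow :: "real^'m \<Rightarrow> real^'n \<Rightarrow> real^'n^'m" where
  "colrow v w = (\<chi> i j. v $ i * w $ j)"

definition B_mat :: "(real^'p) measure \<Rightarrow> real^'p \<Rightarrow> real^'p^('p \<times> 'p)" where
  "B_mat F t =
     2 *\<^sub>R (\<integral>x. (1 / norm (x - t) ^ 4) *\<^sub>R colrow (kron_vec (x - t) (x - t)) (x - t) \<partial>F)
     - kron_vec_I (\<integral>x. (1 / norm (x - t) ^ 2) *\<^sub>R (x - t) \<partial>F)
     - kron_I_vec (\<integral>x. (1 / norm (x - t) ^ 2) *\<^sub>R (x - t) \<partial>F)"

definition stack :: "real^'a \<Rightarrow> real^'b \<Rightarrow> real^('a + 'b)" where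
  "stack a b = (\<chi> k. case k of Inl i \<Rightarrow> a $ i | Inr j \<Rightarrow> b $ j)"

definition A_mat :: "real^'p^('p \<times> 'p) \<Rightarrow> real^('p + ('p \<times> 'p))^('p \<times> 'p)" where
  "A_mat B = (\<chi> r k. case k of Inl i \<Rightarrow> B $ r $ i | Inr j \<Rightarrow> (if r = j then 1 else 0))"

text \<open>N is the k-variate normal distribution N_k(0, Sigma): a Borel probability measure on R^k
  with characteristic function u \<mapsto> exp(-u^T Sigma u / 2) (covers degenerate Sigma).\<close>
definition is_normal_vec :: "real^'k^'k \<Rightarrow> (real^'k) measure \<Rightarrow> bool" where
  "is_normal_vec \<Sigma> N \<longleftrightarrow> prob_space N \<and> sets N = sets borel \<and>
     (\<forall>u. (CLINT x|N. cis (u \<bullet> x)) = complex_of_real (exp (- (u \<bullet> (\<Sigma> *v u)) / 2)))"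

definition conv_distr_normal :: "'a measure \<Rightarrow> (nat \<Rightarrow> 'a \<Rightarrow> real^'k) \<Rightarrow> real^'k^'k \<Rightarrow> bool" where
  "conv_distr_normal M Y \<Sigma> \<longleftrightarrow> (\<exists>N. is_normal_vec \<Sigma> N \<and>
     (\<forall>f :: real^'k \<Rightarrow> real. continuous_on UNIV f \<and> bounded (range f) \<longrightarrow>
        (\<lambda>n. \<integral>\<omega>. f (Y n \<omega>) \<partial>M) \<longlonglongrightarrow> (\<integral>x. f x \<partial>N)))"

end

theory Submission
  imports Defs
begin

text \<open>Put d = t_n - t and y_i = X_i - t. Expanding y \<mapsto> s(y) s(y)^T to first order,
  S_n(t_n) - S_n(t) is the average of the derivatives at the y_i applied to d, plus remainders
  of norm at most 16 (|d| / |y_i|)^(3/2). By (III), sqrt n * d is bounded in probability, and by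
  (II) and Markov's inequality so is the average of |y_i|^(-3/2); hence sqrt n times the
  remainder is O_P(n^(-1/4)). The averaged derivative tends to B in probability by the weak law
  of large numbers, which needs only E |X - t|^(-1) < \<infinity>, a consequence of (II). Thus
  sqrt n * vec (S_n(t_n) - S(F,t)) = A W_n + o_P(1) with W_n the vector of (III), and the theorem
  follows from the linear image of a normal limit and Slutsky's lemma.\<close>

section \<open>Spatial sign matrices and their first-order expansion\<close>

lemma outer_nth: "outer a b $ i = a $ i *\<^sub>R b"
  by (simp add: outer_def vec_eq_iff)

lemma norm_outer: "norm (outer a b) = norm a * norm (b::real^'n)"
proof -
  have "norm (outer a b)^2 = (norm a * norm b)^2"
    unfolding power2_norm_eq_inner power_mult_distrib
    by (simp add: inner_vec_def outer_nth sum_distrib_right sum_distrib_left power2_eq_square mult_ac)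
      (rule sum.swap)
  then show ?thesis by (simp add: power2_eq_iff_nonneg)
qed

lemma norm_colrow: "norm (colrow a b) = norm a * norm (b::real^'n)" for a :: "real^'m"
proof -
  have row: "colrow a b $ i = a $ i *\<^sub>R b" for i by (simp add: colrow_def vec_eq_iff)
  have "norm (colrow a b)^2 = (norm a * norm b)^2"
    unfolding power2_norm_eq_inner power_mult_distrib
    by (simp add: inner_vec_def row sum_distrib_right sum_distrib_left power2_eq_square mult_ac)
      (rule sum.swap)
  then show ?thesis by (simp add: power2_eq_iff_nonneg)
qed

lemma norm_kron_vec: "norm (kron_vec a b) = norm a * norm (b::real^'r)" for a :: "real^'m"
proof -
  have "norm (kron_vec a b)^2 = (norm a * norm b)^2"
    unfolding power2_norm_eq_inner power_mult_distrib
    by (simp add: inner_vec_def kron_vec_def sum_distrib_right sum_distrib_left power2_eq_square mult_ac)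
      (simp add: sum.cartesian_product case_prod_beta)
  then show ?thesis by (simp add: power2_eq_iff_nonneg)
qed

lemma norm_vecm: "norm (vecm M) = norm (M::real^'n^'m)"
proof -
  have "norm (vecm M)^2 = norm M ^2"
    unfolding power2_norm_eq_inner
    by (simp add: inner_vec_def vecm_def sum.cartesian_product case_prod_beta)
  then show ?thesis by (simp add: power2_eq_iff_nonneg)
qed

lemma vecm_diff: "vecm (a - b) = vecm a - vecm b"
  and vecm_add: "vecm (a + b) = vecm a + vecm b"
  and vecm_scaleR: "vecm (r *\<^sub>R a) = r *\<^sub>R vecm a"
  and vecm_sum: "vecm (\<Sum>i\<in>I. f i) = (\<Sum>i\<in>I. vecm (f i))"
  by (simp_all add: vecm_def vec_eq_iff sum_component)

lemma sum_UNIV_Plus: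
  "(\<Sum>k\<in>(UNIV :: ('a::finite + 'b::finite) set). f k) = (\<Sum>a\<in>UNIV. f (Inl a)) + (\<Sum>b\<in>UNIV. f (Inr b))"
  using sum.Plus[of "UNIV :: 'a set" "UNIV :: 'b set" f] by (simp add: comp_def)

lemma A_mat_mult_stack: "A_mat B *v stack a b = B *v a + b"
  by (simp add: vec_eq_iff A_mat_def stack_def matrix_vector_mult_def sum_UNIV_Plus
      if_distrib[of "\<lambda>x. x * _"] sum.delta cong: if_cong)

lemma norm_le_norm_stack: "norm (a::real^'a::finite) \<le> norm (stack a (b::real^'b::finite))"
proof -
  have "norm a ^ 2 \<le> norm (stack a b) ^ 2"
    unfolding power2_norm_eq_inner
    by (simp add: inner_vec_def stack_def sum_UNIV_Plus sum_nonneg)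
  then show ?thesis by (simp add: power2_le_iff_abs_le)
qed

lemma norm_matrix_vector_mult_le: "norm (M *v x) \<le> norm M * norm (x::real^'n)"
  for M :: "real^'n^'m"
proof -
  have row: "(M *v x) $ i = M $ i \<bullet> x" for i
    by (simp add: matrix_vector_mult_def inner_vec_def mult.commute)
  have "norm (M *v x) ^ 2 = (\<Sum>i\<in>UNIV. (M $ i \<bullet> x)^2)"
    unfolding power2_norm_eq_inner by (simp add: inner_vec_def row power2_eq_square)
  also have "\<dots> \<le> (\<Sum>i\<in>UNIV. (norm (M $ i) * norm x)^2)"
    by (intro sum_mono) (simp add: power2_le_iff_abs_le Cauchy_Schwarz_ineq2)
  also have "\<dots> = (norm M * norm x)^2"
    by (simp add: power_mult_distrib sum_distrib_right power2_norm_eq_inner inner_vec_def)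
  finally show ?thesis by (simp add: power2_le_iff_abs_le)
qed

lemma matrix_vector_mult_sum_left: "(\<Sum>i\<in>I. f i) *v x = (\<Sum>i\<in>I. f i *v x)"
  for f :: "'i \<Rightarrow> real^'n^'m"
  unfolding vec_eq_iff matrix_vector_mult_def
  by (simp add: sum_component sum_distrib_right, intro allI sum.swap)

lemma norm_sign_outer_le: "norm (sign_outer x) \<le> 1"
  by (simp add: sign_outer_def norm_outer norm_sgn mult_le_one)

lemma norm_sgn_diff_le:
  fixes y z :: "'a::real_normed_vector"
  assumes "y \<noteq> 0"
  shows "norm (sgn z - sgn y) \<le> 2 * norm (z - y) / norm y"
proof (cases "z = 0")
  case True
  then show ?thesis using assms by (simp add: norm_sgn)
next
  case False
  have "sgn z - sgn y = (1/norm z - 1/norm y) *\<^sub>R z + (1/norm y) *\<^sub>R (z - y)"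
    by (simp add: sgn_div_norm algebra_simps divide_inverse scaleR_diff_right)
  then have "norm (sgn z - sgn y) \<le> \<bar>1/norm z - 1/norm y\<bar> * norm z + norm (z - y) / norm y"
    by (metis (no_types, lifting) norm_scaleR norm_triangle_ineq abs_of_nonneg divide_inverse
        inverse_eq_divide inverse_nonnegative_iff_nonnegative mult.commute norm_ge_zero)
  also have "\<bar>1/norm z - 1/norm y\<bar> * norm z = \<bar>norm y - norm z\<bar> / norm y"
    using False assms by (simp add: field_simps abs_div)
  also have "\<dots> \<le> norm (z - y) / norm y"
    by (intro divide_right_mono) (auto, metis norm_minus_commute norm_triangle_ineq3)
  finally show ?thesis by simp
qed

lemma norm_sign_outer_diff_le:
  "norm (sign_outer z - sign_outer y) \<le> 2 * norm (sgn z - sgn (y::real^'n))"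
proof -
  have "sign_outer z - sign_outer y = outer (sgn z - sgn y) (sgn z) + outer (sgn y) (sgn z - sgn y)"
    by (simp add: sign_outer_def outer_def vec_eq_iff algebra_simps)
  then have "norm (sign_outer z - sign_outer y)
      \<le> norm (sgn z - sgn y) * norm (sgn z) + norm (sgn y) * norm (sgn z - sgn y)"
    by (metis norm_outer norm_triangle_ineq)
  also have "\<dots> \<le> norm (sgn z - sgn y) * 1 + 1 * norm (sgn z - sgn y)"
    by (intro add_mono mult_left_mono mult_right_mono) (auto simp: norm_sgn)
  finally show ?thesis by simp
qed

text \<open>The linear part of \<open>d \<mapsto> sign_outer (y - d)\<close> at \<open>d = 0\<close>, and its matrix with respect
  to \<open>vecm\<close>; the expectation of the latter is \<open>B_mat\<close>.\<close>
definition dsign_outer :: "real^'p \<Rightarrow> real^'p \<Rightarrow> real^'p^'p" where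
  "dsign_outer y d =
     (2 * (y \<bullet> d) / norm y ^ 4) *\<^sub>R outer y y - (1 / norm y ^ 2) *\<^sub>R (outer d y + outer y d)"

definition dsign_outer_mat :: "real^'p \<Rightarrow> real^'p^('p \<times> 'p)" where
  "dsign_outer_mat y = 2 *\<^sub>R ((1 / norm y ^ 4) *\<^sub>R colrow (kron_vec y y) y)
     - kron_vec_I ((1 / norm y ^ 2) *\<^sub>R y) - kron_I_vec ((1 / norm y ^ 2) *\<^sub>R y)"

lemma dsign_outer_mat_mult: "dsign_outer_mat y *v d = vecm (dsign_outer y d)"
  by (simp add: vec_eq_iff dsign_outer_mat_def dsign_outer_def matrix_vector_mult_def vecm_def
      colrow_def kron_vec_def kron_vec_I_def kron_I_vec_def outer_def inner_vec_def
      sum_distrib_left sum_subtractf if_distrib[of "\<lambda>x. _ * x"] algebra_simps cong: if_cong)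
    (simp add: sum.distrib sum_divide_distrib[symmetric] if_distrib[of "\<lambda>x. x / _"]
      sum.delta cong: if_cong)

lemma norm_dsign_outer_le: "norm (dsign_outer y d) \<le> 4 * norm d / norm y"
proof (cases "y = 0")
  case True then show ?thesis by (simp add: dsign_outer_def)
next
  case False
  have "norm ((2 * (y \<bullet> d) / norm y ^ 4) *\<^sub>R outer y y) = 2 * \<bar>y \<bullet> d\<bar> / norm y ^ 2"
    using False by (simp add: norm_outer abs_mult power4_eq_xxxx power2_eq_square)
  also have "\<dots> \<le> 2 * (norm y * norm d) / norm y ^ 2"
    using Cauchy_Schwarz_ineq2[of y d] by (intro divide_right_mono) auto
  finally have 1: "norm ((2 * (y \<bullet> d) / norm y ^ 4) *\<^sub>R outer y y) \<le> 2 * norm d / norm y"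
    using False by (simp add: power2_eq_square)
  have "norm ((1 / norm y ^ 2) *\<^sub>R (outer d y + outer y d)) = norm (outer d y + outer y d) / norm y ^ 2"
    by simp
  also have "\<dots> \<le> 2 * (norm y * norm d) / norm y ^ 2"
    using norm_triangle_ineq[of "outer d y" "outer y d"]
    by (intro divide_right_mono) (simp_all add: norm_outer mult.commute)
  finally have 2: "norm ((1 / norm y ^ 2) *\<^sub>R (outer d y + outer y d)) \<le> 2 * norm d / norm y"
    using False by (simp add: power2_eq_square)
  show ?thesis
    using norm_triangle_ineq4[of "(2 * (y \<bullet> d) / norm y ^ 4) *\<^sub>R outer y y"
        "(1 / norm y ^ 2) *\<^sub>R (outer d y + outer y d)"] 1 2
    by (simp add: dsign_outer_def)
qed

lemma sign_outer_remainder_eq: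
  fixes y d :: "real^'n"
  assumes y: "y \<noteq> 0" and z: "y - d \<noteq> 0"
  shows "sign_outer (y - d) - sign_outer y - dsign_outer y d =
    (1 / norm y ^ 2) *\<^sub>R outer d d
    - (norm d ^ 2 / (norm (y - d) ^ 2 * norm y ^ 2)) *\<^sub>R outer (y - d) (y - d)
    + (2 * (y \<bullet> d) / norm y ^ 2) *\<^sub>R (sign_outer (y - d) - sign_outer y)"
proof -
  have E: "norm d ^ 2 = norm (y - d) ^ 2 - norm y ^ 2 + 2 * (y \<bullet> d)"
    by (simp add: power2_norm_eq_inner inner_diff inner_commute)
  have Y: "norm y ^ 2 \<noteq> 0" "norm (y - d) ^ 2 \<noteq> 0" using y z by auto
  have so: "sign_outer x $ i $ j = x $ i * x $ j / norm x ^ 2" for x :: "real^'n" and i j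
    by (simp add: sign_outer_def outer_def sgn_div_norm power2_eq_square divide_inverse mult_ac)
  have entry: "(yi - di) * (yj - dj) / Z - yi * yj / Y
      - (2 * s / (Y * Y) * (yi * yj) - (di * yj + yi * dj) / Y)
    = di * dj / Y - (Z - Y + 2 * s) / (Z * Y) * ((yi - di) * (yj - dj))
      + 2 * s / Y * ((yi - di) * (yj - dj) / Z - yi * yj / Y)"
    if "Y \<noteq> 0" "Z \<noteq> 0" for yi yj di dj s Y Z :: real
    using that by (simp add: field_simps power2_eq_square)
  show ?thesis
    unfolding vec_eq_iff
  proof (intro allI)
    fix i j
    show "(sign_outer (y - d) - sign_outer y - dsign_outer y d) $ i $ j =
      ((1 / norm y ^ 2) *\<^sub>R outer d d
        - (norm d ^ 2 / (norm (y - d) ^ 2 * norm y ^ 2)) *\<^sub>R outer (y - d) (y - d)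
        + (2 * (y \<bullet> d) / norm y ^ 2) *\<^sub>R (sign_outer (y - d) - sign_outer y)) $ i $ j"
      using entry[OF Y, of "y$i" "d$i" "y$j" "d$j" "y \<bullet> d"]
      unfolding E
      by (simp add: so dsign_outer_def outer_def algebra_simps add_divide_distrib diff_divide_distrib
          power4_eq_xxxx power2_eq_square)
  qed
qed

lemma norm_sign_outer_remainder_le_quadratic:
  fixes y d :: "real^'n"
  assumes y: "y \<noteq> 0" and d: "2 * norm d \<le> norm y"
  shows "norm (sign_outer (y - d) - sign_outer y - dsign_outer y d) \<le> 10 * (norm d / norm y)^2"
proof -
  define \<rho> where "\<rho> = norm d / norm y"
  have r: "norm y > 0" using y by simp
  have "norm (y - d) \<ge> norm y / 2" using norm_triangle_ineq2[of y d] d by linarith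
  then have z: "y - d \<noteq> 0" using r by auto
  have 1: "norm ((1 / norm y ^ 2) *\<^sub>R outer d d) = \<rho>^2"
    by (simp add: norm_outer \<rho>_def power2_eq_square)
  have 2: "norm ((norm d ^ 2 / (norm (y - d) ^ 2 * norm y ^ 2)) *\<^sub>R outer (y - d) (y - d)) = \<rho>^2"
    using z r by (simp add: norm_outer \<rho>_def power2_eq_square)
  have "\<bar>2 * (y \<bullet> d) / norm y ^ 2\<bar> \<le> 2 * \<rho>"
    using Cauchy_Schwarz_ineq2[of y d] r by (simp add: \<rho>_def power2_eq_square abs_mult field_simps)
  moreover have "norm (sign_outer (y - d) - sign_outer y) \<le> 4 * \<rho>"
    using norm_sign_outer_diff_le[of "y - d" y] norm_sgn_diff_le[OF y, of "y - d"]
    by (simp add: \<rho>_def)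
  ultimately have "norm ((2 * (y \<bullet> d) / norm y ^ 2) *\<^sub>R (sign_outer (y - d) - sign_outer y))
      \<le> (2 * \<rho>) * (4 * \<rho>)"
    unfolding norm_scaleR by (intro mult_mono) (auto simp: \<rho>_def)
  then have 3: "norm ((2 * (y \<bullet> d) / norm y ^ 2) *\<^sub>R (sign_outer (y - d) - sign_outer y)) \<le> 8 * \<rho>^2"
    by (simp add: power2_eq_square)
  show ?thesis
    unfolding sign_outer_remainder_eq[OF y z] \<rho>_def[symmetric]
    using 1 2 3 norm_triangle_ineq4[of "(1 / norm y ^ 2) *\<^sub>R outer d d"
        "(norm d ^ 2 / (norm (y - d) ^ 2 * norm y ^ 2)) *\<^sub>R outer (y - d) (y - d)"]
      norm_triangle_ineq[of "(1 / norm y ^ 2) *\<^sub>R outer d d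
        - (norm d ^ 2 / (norm (y - d) ^ 2 * norm y ^ 2)) *\<^sub>R outer (y - d) (y - d)"
        "(2 * (y \<bullet> d) / norm y ^ 2) *\<^sub>R (sign_outer (y - d) - sign_outer y)"]
    by linarith
qed

lemma norm_sign_outer_remainder_le_linear:
  "norm (sign_outer (y - d) - sign_outer y - dsign_outer y d) \<le> 2 + 4 * (norm d / norm y)"
  using norm_triangle_ineq4[of "sign_outer (y - d)" "sign_outer y"]
    norm_triangle_ineq4[of "sign_outer (y - d) - sign_outer y" "dsign_outer y d"]
    norm_sign_outer_le[of "y - d"] norm_sign_outer_le[of y] norm_dsign_outer_le[of y d]
  by simp

lemma norm_sign_outer_remainder_le:
  fixes y d :: "real^'n"
  assumes y: "y \<noteq> 0"
  shows "norm (sign_outer (y - d) - sign_outer y - dsign_outer y d) \<le> 16 * (norm d / norm y) powr (3/2)"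
proof -
  define \<rho> where "\<rho> = norm d / norm y"
  have \<rho>0: "\<rho> \<ge> 0" by (simp add: \<rho>_def)
  have pw: "\<rho> powr (3/2) = \<rho> * sqrt \<rho>"
  proof (cases "\<rho> = 0")
    case False
    have "\<rho> powr (3/2) = \<rho> powr (1 + 1/2)" by simp
    also have "\<dots> = \<rho> * \<rho> powr (1/2)" unfolding powr_add using False \<rho>0 by simp
    finally show ?thesis using \<rho>0 by (simp add: powr_half_sqrt)
  qed simp
  show ?thesis
  proof (cases "\<rho> \<le> 1/2")
    case True
    then have "2 * norm d \<le> norm y" using y by (simp add: \<rho>_def field_simps)
    from norm_sign_outer_remainder_le_quadratic[OF y this]
    have "norm (sign_outer (y - d) - sign_outer y - dsign_outer y d) \<le> 10 * (\<rho> * \<rho>)"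
      by (simp add: \<rho>_def power2_eq_square)
    also have "\<dots> \<le> 16 * (\<rho> * sqrt \<rho>)"
    proof -
      have "\<rho> \<le> sqrt \<rho>"
        using True \<rho>0 by (intro real_le_rsqrt) (simp add: power2_eq_square mult_left_le_one_le)
      then have "\<rho> * \<rho> \<le> \<rho> * sqrt \<rho>" using \<rho>0 by (rule mult_left_mono)
      then show ?thesis using mult_nonneg_nonneg[OF \<rho>0 \<rho>0] by linarith
    qed
    finally show ?thesis unfolding \<rho>_def[symmetric] pw .
  next
    case False
    have "7/10 \<le> sqrt (1/2::real)" by (rule real_le_rsqrt) (simp add: power2_eq_square)
    also have "\<dots> \<le> sqrt \<rho>" using False by simp
    finally have "\<rho> * (7/10) \<le> \<rho> * sqrt \<rho>" using \<rho>0 by (intro mult_left_mono)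
    then have "2 + 4 * \<rho> \<le> 16 * (\<rho> * sqrt \<rho>)" using False by linarith
    with norm_sign_outer_remainder_le_linear[of y d] show ?thesis
      unfolding \<rho>_def[symmetric] pw by linarith
  qed
qed

section \<open>Boundedness and vanishing in probability\<close>

definition bounded_in_prob :: "'a measure \<Rightarrow> (nat \<Rightarrow> 'a \<Rightarrow> 'b::real_normed_vector) \<Rightarrow> bool" where
  "bounded_in_prob M Y \<longleftrightarrow> (\<forall>n. Y n \<in> borel_measurable M) \<and>
     (\<forall>\<gamma>>0. \<exists>K. \<forall>\<^sub>F n in sequentially. measure M {\<omega>\<in>space M. K \<le> norm (Y n \<omega>)} \<le> \<gamma>)"

definition vanishes_in_prob :: "'a measure \<Rightarrow> (nat \<Rightarrow> 'a \<Rightarrow> 'b::real_normed_vector) \<Rightarrow> bool" where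
  "vanishes_in_prob M R \<longleftrightarrow> (\<forall>n. R n \<in> borel_measurable M) \<and>
     (\<forall>e>0. \<forall>\<gamma>>0. \<forall>\<^sub>F n in sequentially. measure M {\<omega>\<in>space M. e \<le> norm (R n \<omega>)} \<le> \<gamma>)"

lemma tendsto_integral_norm_cutoff:
  fixes N :: "'b::real_normed_vector measure"
  assumes "finite_measure N" "sets N = sets borel"
  shows "(\<lambda>m. \<integral>x. min 1 (max 0 (norm x - real m)) \<partial>N) \<longlonglongrightarrow> 0"
proof -
  interpret finite_measure N by fact
  have [measurable_cong]: "sets N = sets borel" by fact
  have "(\<lambda>m. \<integral>x. min 1 (max 0 (norm x - real m)) \<partial>N) \<longlonglongrightarrow> (\<integral>x. 0 \<partial>N)"
  proof (rule integral_dominated_convergence[where w="\<lambda>_. 1"])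
    show "AE x in N. (\<lambda>m. min 1 (max 0 (norm x - real m))) \<longlonglongrightarrow> 0"
    proof (intro AE_I2 tendsto_eventually)
      fix x :: 'b
      show "\<forall>\<^sub>F m in sequentially. min 1 (max 0 (norm x - real m)) = 0"
        using eventually_ge_at_top[of "nat \<lceil>norm x\<rceil>"]
        by eventually_elim (simp add: nat_le_iff ceiling_le_iff)
    qed
  qed auto
  then show ?thesis by simp
qed

context prob_space
begin

lemma bounded_in_prob_positive_bound:
  assumes "bounded_in_prob M Y" "\<gamma> > 0"
  obtains K where "K > 0" "\<forall>\<^sub>F n in sequentially. measure M {\<omega>\<in>space M. K \<le> norm (Y n \<omega>)} \<le> \<gamma>"
proof -
  obtain K where K: "\<forall>\<^sub>F n in sequentially. measure M {\<omega>\<in>space M. K \<le> norm (Y n \<omega>)} \<le> \<gamma>"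
    using assms unfolding bounded_in_prob_def by blast
  have [measurable]: "Y n \<in> borel_measurable M" for n
    using assms(1) by (auto simp: bounded_in_prob_def)
  have "measure M {\<omega>\<in>space M. max K 1 \<le> norm (Y n \<omega>)} \<le> measure M {\<omega>\<in>space M. K \<le> norm (Y n \<omega>)}" for n
    by (intro finite_measure_mono) auto
  with K have "\<forall>\<^sub>F n in sequentially. measure M {\<omega>\<in>space M. max K 1 \<le> norm (Y n \<omega>)} \<le> \<gamma>"
    by (auto elim!: eventually_mono intro: order_trans)
  then show ?thesis by (intro that[of "max K 1"]) auto
qed

lemma vanishes_in_prob_add:
  fixes P Q :: "nat \<Rightarrow> 'a \<Rightarrow> 'b::{real_normed_vector, second_countable_topology}"
  assumes P: "vanishes_in_prob M P" and Q: "vanishes_in_prob M Q"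
  shows "vanishes_in_prob M (\<lambda>n \<omega>. P n \<omega> + Q n \<omega>)"
  unfolding vanishes_in_prob_def
proof (intro conjI allI impI)
  have [measurable]: "P n \<in> borel_measurable M" "Q n \<in> borel_measurable M" for n
    using P Q by (auto simp: vanishes_in_prob_def)
  show "(\<lambda>\<omega>. P n \<omega> + Q n \<omega>) \<in> borel_measurable M" for n by measurable
  fix e \<gamma> :: real assume e: "e > 0" and \<gamma>: "\<gamma> > 0"
  have "\<forall>\<^sub>F n in sequentially. measure M {\<omega>\<in>space M. e / 2 \<le> norm (P n \<omega>)} \<le> \<gamma> / 2"
    "\<forall>\<^sub>F n in sequentially. measure M {\<omega>\<in>space M. e / 2 \<le> norm (Q n \<omega>)} \<le> \<gamma> / 2"
    using P Q e \<gamma> unfolding vanishes_in_prob_def by (meson half_gt_zero)+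
  then show "\<forall>\<^sub>F n in sequentially. measure M {\<omega>\<in>space M. e \<le> norm (P n \<omega> + Q n \<omega>)} \<le> \<gamma>"
  proof eventually_elim
    case (elim n)
    have "e / 2 \<le> norm (P n \<omega>) \<or> e / 2 \<le> norm (Q n \<omega>)" if "e \<le> norm (P n \<omega> + Q n \<omega>)" for \<omega>
      using that norm_triangle_ineq[of "P n \<omega>" "Q n \<omega>"] by linarith
    then have "{\<omega>\<in>space M. e \<le> norm (P n \<omega> + Q n \<omega>)}
        \<subseteq> {\<omega>\<in>space M. e / 2 \<le> norm (P n \<omega>)} \<union> {\<omega>\<in>space M. e / 2 \<le> norm (Q n \<omega>)}"
      by blast
    then have "measure M {\<omega>\<in>space M. e \<le> norm (P n \<omega> + Q n \<omega>)}
        \<le> measure M {\<omega>\<in>space M. e / 2 \<le> norm (P n \<omega>)} + measure M {\<omega>\<in>space M. e / 2 \<le> norm (Q n \<omega>)}"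
      by (intro order_trans[OF finite_measure_mono measure_Un_le]) auto
    with elim show ?case by linarith
  qed
qed

lemma vanishes_in_prob_norm:
  fixes R :: "nat \<Rightarrow> 'a \<Rightarrow> 'b::real_normed_vector"
  assumes "vanishes_in_prob M R"
  shows "vanishes_in_prob M (\<lambda>n \<omega>. norm (R n \<omega>))"
  using assms by (auto simp: vanishes_in_prob_def intro: measurable_compose[OF _ borel_measurable_norm])

lemma vanishes_in_prob_mult_bounded:
  fixes P U :: "nat \<Rightarrow> 'a \<Rightarrow> real"
  assumes P: "vanishes_in_prob M P" and U: "bounded_in_prob M U"
  shows "vanishes_in_prob M (\<lambda>n \<omega>. P n \<omega> * U n \<omega>)"
  unfolding vanishes_in_prob_def
proof (intro conjI allI impI)
  have [measurable]: "P n \<in> borel_measurable M" "U n \<in> borel_measurable M" for n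
    using P U by (auto simp: vanishes_in_prob_def bounded_in_prob_def)
  show "(\<lambda>\<omega>. P n \<omega> * U n \<omega>) \<in> borel_measurable M" for n by measurable
  fix e \<gamma> :: real assume e: "e > 0" and \<gamma>: "\<gamma> > 0"
  obtain K where K: "K > 0" "\<forall>\<^sub>F n in sequentially. measure M {\<omega>\<in>space M. K \<le> norm (U n \<omega>)} \<le> \<gamma> / 2"
    using U \<gamma> by (auto elim: bounded_in_prob_positive_bound[of U "\<gamma> / 2"])
  have "\<forall>\<^sub>F n in sequentially. measure M {\<omega>\<in>space M. e / K \<le> norm (P n \<omega>)} \<le> \<gamma> / 2"
    using P e \<gamma> K(1) unfolding vanishes_in_prob_def by (meson divide_pos_pos half_gt_zero)
  with K(2) show "\<forall>\<^sub>F n in sequentially. measure M {\<omega>\<in>space M. e \<le> norm (P n \<omega> * U n \<omega>)} \<le> \<gamma>"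
  proof eventually_elim
    case (elim n)
    have "\<bar>P n \<omega> * U n \<omega>\<bar> < e" if "\<bar>P n \<omega>\<bar> < e / K" "\<bar>U n \<omega>\<bar> < K" for \<omega>
    proof -
      have "\<bar>P n \<omega>\<bar> * \<bar>U n \<omega>\<bar> \<le> (e / K) * \<bar>U n \<omega>\<bar>"
        using that(1) by (intro mult_right_mono) auto
      also have "\<dots> < (e / K) * K" using that e K(1) by (intro mult_strict_left_mono) auto
      finally show ?thesis using K(1) by (simp add: abs_mult)
    qed
    then have "{\<omega>\<in>space M. e \<le> norm (P n \<omega> * U n \<omega>)}
        \<subseteq> {\<omega>\<in>space M. K \<le> norm (U n \<omega>)} \<union> {\<omega>\<in>space M. e / K \<le> norm (P n \<omega>)}"
      by (force simp: not_le[symmetric])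
    then have "measure M {\<omega>\<in>space M. e \<le> norm (P n \<omega> * U n \<omega>)}
        \<le> measure M {\<omega>\<in>space M. K \<le> norm (U n \<omega>)} + measure M {\<omega>\<in>space M. e / K \<le> norm (P n \<omega>)}"
      by (intro order_trans[OF finite_measure_mono measure_Un_le]) auto
    with elim show ?case by linarith
  qed
qed

lemma bounded_in_prob_mult:
  fixes U V :: "nat \<Rightarrow> 'a \<Rightarrow> real"
  assumes U: "bounded_in_prob M U" and V: "bounded_in_prob M V"
  shows "bounded_in_prob M (\<lambda>n \<omega>. U n \<omega> * V n \<omega>)"
  unfolding bounded_in_prob_def
proof (intro conjI allI impI)
  have [measurable]: "U n \<in> borel_measurable M" "V n \<in> borel_measurable M" for n
    using U V by (auto simp: bounded_in_prob_def)
  show "(\<lambda>\<omega>. U n \<omega> * V n \<omega>) \<in> borel_measurable M" for n by measurable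
  fix \<gamma> :: real assume \<gamma>: "\<gamma> > 0"
  obtain K where K: "K > 0" "\<forall>\<^sub>F n in sequentially. measure M {\<omega>\<in>space M. K \<le> norm (U n \<omega>)} \<le> \<gamma> / 2"
    using U \<gamma> by (auto elim: bounded_in_prob_positive_bound[of U "\<gamma> / 2"])
  obtain L where L: "L > 0" "\<forall>\<^sub>F n in sequentially. measure M {\<omega>\<in>space M. L \<le> norm (V n \<omega>)} \<le> \<gamma> / 2"
    using V \<gamma> by (auto elim: bounded_in_prob_positive_bound[of V "\<gamma> / 2"])
  from K(2) L(2) have "\<forall>\<^sub>F n in sequentially. measure M {\<omega>\<in>space M. K * L \<le> norm (U n \<omega> * V n \<omega>)} \<le> \<gamma>"
  proof eventually_elim
    case (elim n)
    have "\<bar>U n \<omega>\<bar> * \<bar>V n \<omega>\<bar> < K * L" if "\<bar>U n \<omega>\<bar> < K" "\<bar>V n \<omega>\<bar> < L" for \<omega>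
      using that by (intro mult_strict_mono) auto
    then have "{\<omega>\<in>space M. K * L \<le> norm (U n \<omega> * V n \<omega>)}
        \<subseteq> {\<omega>\<in>space M. K \<le> norm (U n \<omega>)} \<union> {\<omega>\<in>space M. L \<le> norm (V n \<omega>)}"
      by (force simp: not_le[symmetric] abs_mult)
    then have "measure M {\<omega>\<in>space M. K * L \<le> norm (U n \<omega> * V n \<omega>)}
        \<le> measure M {\<omega>\<in>space M. K \<le> norm (U n \<omega>)} + measure M {\<omega>\<in>space M. L \<le> norm (V n \<omega>)}"
      by (intro order_trans[OF finite_measure_mono measure_Un_le]) auto
    with elim show ?case by linarith
  qed
  then show "\<exists>K. \<forall>\<^sub>F n in sequentially. measure M {\<omega>\<in>space M. K \<le> norm (U n \<omega> * V n \<omega>)} \<le> \<gamma>" ..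
qed

lemma bounded_in_prob_norm_powr:
  assumes Y: "bounded_in_prob M Y" and r: "r > 0"
  shows "bounded_in_prob M (\<lambda>n \<omega>. norm (Y n \<omega>) powr r)"
  unfolding bounded_in_prob_def
proof (intro conjI allI impI)
  have [measurable]: "Y n \<in> borel_measurable M" for n using Y by (auto simp: bounded_in_prob_def)
  show "(\<lambda>\<omega>. norm (Y n \<omega>) powr r) \<in> borel_measurable M" for n by measurable
  fix \<gamma> :: real assume \<gamma>: "\<gamma> > 0"
  obtain K where K: "K > 0" "\<forall>\<^sub>F n in sequentially. measure M {\<omega>\<in>space M. K \<le> norm (Y n \<omega>)} \<le> \<gamma>"
    using Y \<gamma> by (auto elim: bounded_in_prob_positive_bound)
  have "{\<omega>\<in>space M. K powr r \<le> norm (norm (Y n \<omega>) powr r)} = {\<omega>\<in>space M. K \<le> norm (Y n \<omega>)}" for n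
    using K(1) r by (auto intro: powr_mono2) (meson norm_ge_zero not_le powr_less_mono2)
  with K(2) show "\<exists>K. \<forall>\<^sub>F n in sequentially. measure M {\<omega>\<in>space M. K \<le> norm (norm (Y n \<omega>) powr r)} \<le> \<gamma>"
    by (intro exI[of _ "K powr r"]) simp
qed

lemma vanishes_in_prob_const:
  fixes a :: "nat \<Rightarrow> 'b::real_normed_vector"
  assumes "a \<longlonglongrightarrow> 0"
  shows "vanishes_in_prob M (\<lambda>n _. a n)"
  unfolding vanishes_in_prob_def
proof (intro conjI allI impI)
  fix e \<gamma> :: real assume "e > 0" "\<gamma> > 0"
  with assms have "\<forall>\<^sub>F n in sequentially. norm (a n) < e"
    by (auto simp: tendsto_iff dist_norm)
  then show "\<forall>\<^sub>F n in sequentially. measure M {\<omega>\<in>space M. e \<le> norm (a n)} \<le> \<gamma>"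
    by eventually_elim (use \<open>\<gamma> > 0\<close> in auto)
qed simp

lemma vanishes_in_prob_dominated:
  fixes R :: "nat \<Rightarrow> 'a \<Rightarrow> 'b::real_normed_vector" and P :: "nat \<Rightarrow> 'a \<Rightarrow> real"
  assumes R: "\<And>n. R n \<in> borel_measurable M" and P: "vanishes_in_prob M P"
    and le: "\<forall>\<^sub>F n in sequentially. AE \<omega> in M. norm (R n \<omega>) \<le> P n \<omega>"
  shows "vanishes_in_prob M R"
  unfolding vanishes_in_prob_def
proof (intro conjI allI impI R)
  have [measurable]: "P n \<in> borel_measurable M" for n using P by (auto simp: vanishes_in_prob_def)
  fix e \<gamma> :: real assume "e > 0" "\<gamma> > 0"
  then have "\<forall>\<^sub>F n in sequentially. measure M {\<omega>\<in>space M. e \<le> norm (P n \<omega>)} \<le> \<gamma>"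
    using P by (auto simp: vanishes_in_prob_def)
  with le show "\<forall>\<^sub>F n in sequentially. measure M {\<omega>\<in>space M. e \<le> norm (R n \<omega>)} \<le> \<gamma>"
  proof eventually_elim
    case (elim n)
    have "measure M {\<omega>\<in>space M. e \<le> norm (R n \<omega>)} \<le> measure M {\<omega>\<in>space M. e \<le> norm (P n \<omega>)}"
      using elim(1) by (intro finite_measure_mono_AE) (auto elim!: eventually_mono)
    with elim(2) show ?case by linarith
  qed
qed

lemma bounded_in_prob_integral_le:
  fixes Y :: "nat \<Rightarrow> 'a \<Rightarrow> real"
  assumes int: "\<And>n. integrable M (Y n)" and nonneg: "\<And>n \<omega>. 0 \<le> Y n \<omega>"
    and le: "\<And>n. expectation (Y n) \<le> C"
  shows "bounded_in_prob M Y"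
  unfolding bounded_in_prob_def
proof (intro conjI allI impI)
  show "Y n \<in> borel_measurable M" for n using int by auto
  fix \<gamma> :: real assume \<gamma>: "\<gamma> > 0"
  have "0 \<le> expectation (Y 0)" using nonneg by (simp add: integral_nonneg)
  then have C: "0 \<le> C" using le[of 0] by linarith
  define K where "K = (C + 1) / \<gamma>"
  have K: "K > 0" using C \<gamma> by (simp add: K_def)
  have "measure M {\<omega>\<in>space M. K \<le> norm (Y n \<omega>)} \<le> \<gamma>" for n
  proof -
    have "measure M {\<omega>\<in>space M. K \<le> norm (Y n \<omega>)} = measure M {\<omega>\<in>space M. Y n \<omega> \<ge> K}"
      using nonneg by (simp add: abs_of_nonneg)
    also have "\<dots> \<le> expectation (Y n) / K"
      using int K nonneg by (intro integral_Markov_inequality_measure[where A="space M"]) auto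
    also have "\<dots> \<le> C / K" using le K by (intro divide_right_mono) auto
    also have "\<dots> \<le> \<gamma>" using C \<gamma> by (simp add: K_def field_simps)
    finally show ?thesis .
  qed
  then show "\<exists>K. \<forall>\<^sub>F n in sequentially. measure M {\<omega>\<in>space M. K \<le> norm (Y n \<omega>)} \<le> \<gamma>"
    by (intro exI[of _ K] always_eventually allI)
qed

lemma bounded_in_prob_if_conv_distr_normal:
  fixes Y :: "nat \<Rightarrow> 'a \<Rightarrow> real^'k"
  assumes Ym: "\<And>n. Y n \<in> borel_measurable M" and conv: "conv_distr_normal M Y \<Sigma>"
  shows "bounded_in_prob M Y"
  unfolding bounded_in_prob_def
proof (intro conjI allI impI Ym)
  fix \<gamma> :: real assume \<gamma>: "\<gamma> > 0"
  obtain N where N: "is_normal_vec \<Sigma> N" and lim: "\<And>f :: real^'k \<Rightarrow> real.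
      continuous_on UNIV f \<Longrightarrow> bounded (range f) \<Longrightarrow> (\<lambda>n. \<integral>\<omega>. f (Y n \<omega>) \<partial>M) \<longlonglongrightarrow> (\<integral>x. f x \<partial>N)"
    using conv unfolding conv_distr_normal_def by blast
  text \<open>Continuous cut-offs of the indicator of \<open>{x. m + 1 \<le> norm x}\<close>.\<close>
  define g where "g m x = min 1 (max 0 (norm x - real m))" for m :: nat and x :: "real^'k"
  have gc: "continuous_on UNIV (g m)" for m unfolding g_def by (intro continuous_intros)
  have gb: "bounded (range (g m))" for m unfolding g_def bounded_iff by (intro exI[of _ 1]) auto
  have "\<forall>\<^sub>F m in sequentially. (\<integral>x. g m x \<partial>N) < \<gamma>"
    using N \<gamma> tendsto_integral_norm_cutoff[of N] unfolding g_def
    by (intro order_tendstoD(2)) (auto simp: is_normal_vec_def prob_space_def)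
  then obtain m where m: "(\<integral>x. g m x \<partial>N) < \<gamma>"
    by (auto simp: eventually_sequentially)
  have "prob {\<omega>\<in>space M. real m + 1 \<le> norm (Y n \<omega>)} \<le> (\<integral>\<omega>. g m (Y n \<omega>) \<partial>M)" for n
  proof -
    have "(\<lambda>\<omega>. g m (Y n \<omega>)) \<in> borel_measurable M"
      using borel_measurable_continuous_onI[OF gc] Ym by measurable
    then have "integrable M (\<lambda>\<omega>. g m (Y n \<omega>))"
      by (intro integrable_const_bound[where B=1]) (auto simp: g_def)
    moreover have S: "{\<omega>\<in>space M. real m + 1 \<le> norm (Y n \<omega>)} \<in> events"
      using Ym by measurable
    moreover have "integrable M (indicator {\<omega>\<in>space M. real m + 1 \<le> norm (Y n \<omega>)} :: _ \<Rightarrow> real)"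
      using S by (intro integrable_real_indicator) (auto simp: emeasure_finite less_top[symmetric])
    ultimately have "expectation (indicator {\<omega>\<in>space M. real m + 1 \<le> norm (Y n \<omega>)})
        \<le> (\<integral>\<omega>. g m (Y n \<omega>) \<partial>M)"
      by (intro integral_mono) (auto simp: g_def indicator_def)
    then show ?thesis using S by simp
  qed
  moreover have "\<forall>\<^sub>F n in sequentially. (\<integral>\<omega>. g m (Y n \<omega>) \<partial>M) < \<gamma>"
    using order_tendstoD(2)[OF lim[OF gc gb] m] .
  ultimately have "\<forall>\<^sub>F n in sequentially. prob {\<omega>\<in>space M. real m + 1 \<le> norm (Y n \<omega>)} \<le> \<gamma>"
    by (auto elim!: eventually_mono intro: order_trans less_imp_le)
  then show "\<exists>K. \<forall>\<^sub>F n in sequentially. prob {\<omega>\<in>space M. K \<le> norm (Y n \<omega>)} \<le> \<gamma>" ..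
qed

lemma abs_expectation_diff_le:
  fixes f g :: "'a \<Rightarrow> real"
  assumes [measurable]: "f \<in> borel_measurable M" "g \<in> borel_measurable M" "A \<in> events"
    and bf: "\<And>\<omega>. \<bar>f \<omega>\<bar> \<le> B" and bg: "\<And>\<omega>. \<bar>g \<omega>\<bar> \<le> B"
    and c: "0 \<le> c" and close: "\<And>\<omega>. \<omega> \<in> space M \<Longrightarrow> \<omega> \<notin> A \<Longrightarrow> \<bar>f \<omega> - g \<omega>\<bar> \<le> c"
  shows "\<bar>expectation f - expectation g\<bar> \<le> c + 2 * B * prob A"
proof -
  have fi: "integrable M f" by (rule integrable_const_bound[where B=B]) (auto simp: bf)
  have gi: "integrable M g" by (rule integrable_const_bound[where B=B]) (auto simp: bg)
  have Ai: "integrable M (indicator A :: 'a \<Rightarrow> real)"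
    by (intro integrable_real_indicator) (auto simp: emeasure_finite less_top[symmetric])
  have "\<bar>expectation f - expectation g\<bar> = \<bar>expectation (\<lambda>\<omega>. f \<omega> - g \<omega>)\<bar>"
    using fi gi by simp
  also have "\<dots> \<le> expectation (\<lambda>\<omega>. \<bar>f \<omega> - g \<omega>\<bar>)"
    by (rule integral_abs_bound)
  also have "\<dots> \<le> expectation (\<lambda>\<omega>. c + 2 * B * indicator A \<omega>)"
  proof (rule integral_mono)
    fix \<omega> assume "\<omega> \<in> space M"
    then show "\<bar>f \<omega> - g \<omega>\<bar> \<le> c + 2 * B * indicator A \<omega>"
      using close[of \<omega>] bf[of \<omega>] bg[of \<omega>] c by (cases "\<omega> \<in> A") auto
  qed (use fi gi Ai in auto)
  also have "\<dots> = c + 2 * B * prob A"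
    using Ai by (simp add: prob_space)
  finally show ?thesis .
qed

lemma tendsto_expectation_add_vanishing:
  fixes Y R :: "nat \<Rightarrow> 'a \<Rightarrow> 'b::euclidean_space" and f :: "'b \<Rightarrow> real"
  assumes Y: "bounded_in_prob M Y" and R: "vanishes_in_prob M R"
    and fc: "continuous_on UNIV f" and fb: "bounded (range f)"
  shows "(\<lambda>n. expectation (\<lambda>\<omega>. f (Y n \<omega> + R n \<omega>)) - expectation (\<lambda>\<omega>. f (Y n \<omega>))) \<longlonglongrightarrow> 0"
  unfolding tendsto_iff dist_real_def diff_0_right
proof (intro allI impI)
  have [measurable]: "Y n \<in> borel_measurable M" "R n \<in> borel_measurable M" for n
    using Y R by (auto simp: bounded_in_prob_def vanishes_in_prob_def)
  have [measurable]: "f \<in> borel_measurable borel" using borel_measurable_continuous_onI[OF fc] .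
  obtain B where B: "\<And>x. \<bar>f x\<bar> \<le> B" using fb unfolding bounded_iff by auto
  have B0: "B \<ge> 0" using B[of 0] by linarith
  fix \<epsilon> :: real assume \<epsilon>: "\<epsilon> > 0"
  define \<gamma> where "\<gamma> = \<epsilon> / (8 * (B + 1))"
  have \<gamma>: "\<gamma> > 0" and \<gamma>B: "2 * B * (2 * \<gamma>) < \<epsilon> / 2"
    using \<epsilon> B0 by (auto simp: \<gamma>_def field_simps)
  obtain K where K: "K > 0" "\<forall>\<^sub>F n in sequentially. prob {\<omega>\<in>space M. K \<le> norm (Y n \<omega>)} \<le> \<gamma>"
    using Y \<gamma> by (auto elim: bounded_in_prob_positive_bound)
  have "uniformly_continuous_on (cball 0 (K + 1)) f"
    by (intro compact_uniformly_continuous continuous_on_subset[OF fc]) auto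
  then obtain d where d: "d > 0" "\<And>x x'. x \<in> cball 0 (K + 1) \<Longrightarrow> x' \<in> cball 0 (K + 1) \<Longrightarrow>
      dist x' x < d \<Longrightarrow> dist (f x') (f x) < \<epsilon> / 2"
    unfolding uniformly_continuous_on_def using \<epsilon> by (metis half_gt_zero)
  have "\<forall>\<^sub>F n in sequentially. prob {\<omega>\<in>space M. min d 1 \<le> norm (R n \<omega>)} \<le> \<gamma>"
    using R d(1) \<gamma> unfolding vanishes_in_prob_def by simp
  with K(2) show "\<forall>\<^sub>F n in sequentially.
      \<bar>expectation (\<lambda>\<omega>. f (Y n \<omega> + R n \<omega>)) - expectation (\<lambda>\<omega>. f (Y n \<omega>))\<bar> < \<epsilon>"
  proof eventually_elim
    case (elim n)
    define A where "A = {\<omega>\<in>space M. K \<le> norm (Y n \<omega>)} \<union> {\<omega>\<in>space M. min d 1 \<le> norm (R n \<omega>)}"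
    have [measurable]: "A \<in> events" unfolding A_def by measurable
    have "prob A \<le> prob {\<omega>\<in>space M. K \<le> norm (Y n \<omega>)} + prob {\<omega>\<in>space M. min d 1 \<le> norm (R n \<omega>)}"
      unfolding A_def by (intro measure_Un_le) auto
    with elim have "prob A \<le> 2 * \<gamma>" by linarith
    have "\<bar>f (Y n \<omega> + R n \<omega>) - f (Y n \<omega>)\<bar> \<le> \<epsilon> / 2" if "\<omega> \<in> space M" "\<omega> \<notin> A" for \<omega>
    proof -
      have Y: "norm (Y n \<omega>) < K" and R: "norm (R n \<omega>) < min d 1" using that by (auto simp: A_def)
      then have "norm (Y n \<omega> + R n \<omega>) \<le> K + 1"
        using norm_triangle_ineq[of "Y n \<omega>" "R n \<omega>"] by linarith
      moreover have "dist (Y n \<omega> + R n \<omega>) (Y n \<omega>) < d" using R by (simp add: dist_norm)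
      ultimately have "Y n \<omega> \<in> cball 0 (K + 1)" "Y n \<omega> + R n \<omega> \<in> cball 0 (K + 1)"
        "dist (Y n \<omega> + R n \<omega>) (Y n \<omega>) < d"
        using Y by auto
      from d(2)[OF this] show ?thesis by (simp add: dist_real_def)
    qed
    then have "\<bar>expectation (\<lambda>\<omega>. f (Y n \<omega> + R n \<omega>)) - expectation (\<lambda>\<omega>. f (Y n \<omega>))\<bar>
        \<le> \<epsilon> / 2 + 2 * B * prob A"
      using \<epsilon> B by (intro abs_expectation_diff_le) auto
    also have "\<dots> \<le> \<epsilon> / 2 + 2 * B * (2 * \<gamma>)"
      using \<open>prob A \<le> 2 * \<gamma>\<close> B0 by (intro add_left_mono mult_left_mono) auto
    finally show ?case using \<gamma>B by linarith
  qed
qed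

lemma conv_distr_normal_add_vanishing:
  fixes Y R :: "nat \<Rightarrow> 'a \<Rightarrow> real^'k"
  assumes Ym: "\<And>n. Y n \<in> borel_measurable M" and conv: "conv_distr_normal M Y \<Sigma>"
    and R: "vanishes_in_prob M R"
  shows "conv_distr_normal M (\<lambda>n \<omega>. Y n \<omega> + R n \<omega>) \<Sigma>"
proof -
  obtain N where N: "is_normal_vec \<Sigma> N" and lim: "\<And>f :: real^'k \<Rightarrow> real.
      continuous_on UNIV f \<Longrightarrow> bounded (range f) \<Longrightarrow> (\<lambda>n. \<integral>\<omega>. f (Y n \<omega>) \<partial>M) \<longlonglongrightarrow> (\<integral>x. f x \<partial>N)"
    using conv unfolding conv_distr_normal_def by blast
  have Y: "bounded_in_prob M Y" by (rule bounded_in_prob_if_conv_distr_normal[OF Ym conv])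
  have "(\<lambda>n. \<integral>\<omega>. f (Y n \<omega> + R n \<omega>) \<partial>M) \<longlonglongrightarrow> (\<integral>x. f x \<partial>N)"
    if "continuous_on UNIV f" "bounded (range f)" for f :: "real^'k \<Rightarrow> real"
    using tendsto_add[OF lim[OF that] tendsto_expectation_add_vanishing[OF Y R that]] by simp
  with N show ?thesis unfolding conv_distr_normal_def by blast
qed

end

lemma conv_distr_normal_linear_image:
  fixes W :: "nat \<Rightarrow> 'a \<Rightarrow> real^'k" and A :: "real^'k^'m"
  assumes conv: "conv_distr_normal M W \<Xi>"
  shows "conv_distr_normal M (\<lambda>n \<omega>. A *v W n \<omega>) (A ** \<Xi> ** transpose A)"
proof -
  obtain N where N: "is_normal_vec \<Xi> N" and lim: "\<And>f :: real^'k \<Rightarrow> real.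
      continuous_on UNIV f \<Longrightarrow> bounded (range f) \<Longrightarrow> (\<lambda>n. \<integral>\<omega>. f (W n \<omega>) \<partial>M) \<longlonglongrightarrow> (\<integral>x. f x \<partial>N)"
    using conv unfolding conv_distr_normal_def by blast
  have Np: "prob_space N" and Ns: "sets N = sets borel"
    and cf: "\<And>u. (CLINT x|N. cis (u \<bullet> x)) = complex_of_real (exp (- (u \<bullet> (\<Xi> *v u)) / 2))"
    using N by (auto simp: is_normal_vec_def)
  have Ac: "continuous_on UNIV (\<lambda>x. A *v x)"
    using linear_continuous_on[OF matrix_vector_mul_bounded_linear[of A]] by simp
  have Am: "(\<lambda>x. A *v x) \<in> measurable N borel"
    using borel_measurable_continuous_onI[OF Ac] measurable_cong_sets[OF Ns refl] by blast
  define N' where "N' = distr N borel (\<lambda>x. A *v x)"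
  have "is_normal_vec (A ** \<Xi> ** transpose A) N'"
    unfolding is_normal_vec_def
  proof (intro conjI allI)
    show "prob_space N'" unfolding N'_def using Np Am by (intro prob_space.prob_space_distr) auto
    show "sets N' = sets borel" by (simp add: N'_def)
    fix u :: "real^'m"
    have cm: "(\<lambda>x. cis (u \<bullet> x)) \<in> borel_measurable borel"
      by (intro borel_measurable_continuous_onI continuous_intros)
    have "(CLINT x|N'. cis (u \<bullet> x)) = (CLINT x|N. cis ((transpose A *v u) \<bullet> x))"
      unfolding N'_def integral_distr[OF Am cm] by (simp add: dot_lmul_matrix)
    also have "\<dots> = complex_of_real (exp (- ((transpose A *v u) \<bullet> (\<Xi> *v (transpose A *v u))) / 2))"
      by (rule cf)
    also have "(transpose A *v u) \<bullet> (\<Xi> *v (transpose A *v u)) = u \<bullet> ((A ** \<Xi> ** transpose A) *v u)"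
      by (simp add: dot_lmul_matrix matrix_vector_mul_assoc[symmetric])
    finally show "(CLINT x|N'. cis (u \<bullet> x)) = complex_of_real (exp (- (u \<bullet> ((A ** \<Xi> ** transpose A) *v u)) / 2))" .
  qed
  moreover have "(\<lambda>n. \<integral>\<omega>. f (A *v W n \<omega>) \<partial>M) \<longlonglongrightarrow> (\<integral>x. f x \<partial>N')"
    if f: "continuous_on UNIV f" "bounded (range f)" for f :: "real^'m \<Rightarrow> real"
  proof -
    have "(\<integral>x. f x \<partial>N') = (\<integral>x. f (A *v x) \<partial>N)"
      unfolding N'_def by (rule integral_distr[OF Am borel_measurable_continuous_onI[OF f(1)]])
    moreover have "(\<lambda>n. \<integral>\<omega>. f (A *v W n \<omega>) \<partial>M) \<longlonglongrightarrow> (\<integral>x. f (A *v x) \<partial>N)"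
      by (rule lim[of "\<lambda>x. f (A *v x)"])
        (auto intro: continuous_on_compose2[OF f(1) Ac] bounded_subset[OF f(2)])
    ultimately show ?thesis by simp
  qed
  ultimately show ?thesis unfolding conv_distr_normal_def by blast
qed

section \<open>Weak law of large numbers\<close>

lemma tendsto_integral_truncation:
  fixes g :: "'b \<Rightarrow> real"
  assumes "integrable F g"
  shows "(\<lambda>L. \<integral>x. \<bar>g x - (if \<bar>g x\<bar> \<le> real L then g x else 0)\<bar> \<partial>F) \<longlonglongrightarrow> 0"
proof -
  have "(\<lambda>L. \<integral>x. \<bar>g x - (if \<bar>g x\<bar> \<le> real L then g x else 0)\<bar> \<partial>F) \<longlonglongrightarrow> (\<integral>x. 0 \<partial>F)"
  proof (rule integral_dominated_convergence[where w="\<lambda>x. \<bar>g x\<bar>"])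
    show "AE x in F. (\<lambda>L. \<bar>g x - (if \<bar>g x\<bar> \<le> real L then g x else 0)\<bar>) \<longlonglongrightarrow> 0"
    proof (intro AE_I2 tendsto_eventually)
      fix x
      show "\<forall>\<^sub>F L in sequentially. \<bar>g x - (if \<bar>g x\<bar> \<le> real L then g x else 0)\<bar> = 0"
        using eventually_ge_at_top[of "nat \<lceil>\<bar>g x\<bar>\<rceil>"]
        by eventually_elim (simp add: nat_le_iff ceiling_le_iff)
    qed
  qed (use assms in \<open>auto intro: borel_measurable_integrable\<close>)
  then show ?thesis by simp
qed

context prob_space
begin

lemma integral_square_sum_indep_le:
  fixes c :: "nat \<Rightarrow> 'a \<Rightarrow> real"
  assumes ind: "indep_vars (\<lambda>_. borel) c UNIV" and cm: "\<And>i. c i \<in> borel_measurable M"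
    and cb: "\<And>i \<omega>. \<bar>c i \<omega>\<bar> \<le> C" and c0: "\<And>i. expectation (c i) = 0"
  shows "expectation (\<lambda>\<omega>. (\<Sum>i\<in>I. c i \<omega>)^2) \<le> real (card I) * C^2"
proof -
  note cm[measurable]
  have C0: "0 \<le> C" using cb[of 0 undefined] by linarith
  have sq: "\<bar>c i \<omega> * c j \<omega>\<bar> \<le> C^2" for i j \<omega>
    unfolding abs_mult power2_eq_square by (intro mult_mono cb) (auto simp: C0)
  have ci: "integrable M (c i)" for i by (rule integrable_const_bound[where B=C]) (auto simp: cb)
  have cci: "integrable M (\<lambda>\<omega>. c i \<omega> * c j \<omega>)" for i j
    by (rule integrable_const_bound[where B="C^2"]) (auto simp: sq)
  have off: "expectation (\<lambda>\<omega>. c i \<omega> * c j \<omega>) = 0" if "i \<noteq> j" for i j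
  proof -
    have "indep_vars (\<lambda>_. borel) c {i, j}" by (rule indep_vars_subset[OF ind]) auto
    then have "expectation (\<lambda>\<omega>. \<Prod>k\<in>{i,j}. c k \<omega>) = (\<Prod>k\<in>{i,j}. expectation (c k))"
      by (intro indep_vars_lebesgue_integral) (auto simp: ci)
    then show ?thesis using that by (simp add: c0)
  qed
  show ?thesis
  proof (cases "finite I")
    case True
    have "expectation (\<lambda>\<omega>. (\<Sum>i\<in>I. c i \<omega>)^2) = (\<Sum>i\<in>I. \<Sum>j\<in>I. expectation (\<lambda>\<omega>. c i \<omega> * c j \<omega>))"
      by (simp add: power2_eq_square sum_product integral_sum cci)
    also have "\<dots> = (\<Sum>i\<in>I. expectation (\<lambda>\<omega>. c i \<omega> * c i \<omega>))"
      using True off by (intro sum.cong refl) (simp add: sum.remove)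
    also have "\<dots> \<le> (\<Sum>i\<in>I. expectation (\<lambda>_. C^2))"
      using sq by (intro sum_mono integral_mono) (auto simp: cci abs_le_iff)
    finally show ?thesis by (simp add: prob_space)
  qed simp
qed

lemma prob_abs_mean_ge_le:
  fixes c :: "nat \<Rightarrow> 'a \<Rightarrow> real"
  assumes ind: "indep_vars (\<lambda>_. borel) c UNIV" and cm: "\<And>i. c i \<in> borel_measurable M"
    and cb: "\<And>i \<omega>. \<bar>c i \<omega>\<bar> \<le> C" and c0: "\<And>i. expectation (c i) = 0"
    and n: "n \<ge> 1" and \<eta>: "\<eta> > 0"
  shows "prob {\<omega>\<in>space M. \<eta> \<le> \<bar>(1 / real n) * (\<Sum>i\<in>{1..n}. c i \<omega>)\<bar>} \<le> C^2 / (\<eta>^2 * real n)"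
proof -
  note cm[measurable]
  let ?m = "\<lambda>\<omega>. (1 / real n) * (\<Sum>i\<in>{1..n}. c i \<omega>)"
  have "\<bar>?m \<omega>\<bar> \<le> C" for \<omega>
  proof -
    have "\<bar>\<Sum>i\<in>{1..n}. c i \<omega>\<bar> \<le> real n * C"
      using order_trans[OF sum_abs sum_mono[of "{1..n}" "\<lambda>i. \<bar>c i \<omega>\<bar>" "\<lambda>_. C"]] cb by simp
    then show ?thesis using n by (simp add: abs_mult field_simps)
  qed
  then have "\<bar>?m \<omega>\<bar>^2 \<le> C^2" for \<omega> by (rule power_mono) simp
  then have "\<bar>(?m \<omega>)^2\<bar> \<le> C^2" for \<omega> by (simp only: abs_power2 power2_abs)
  then have "integrable M (\<lambda>\<omega>. (?m \<omega>)^2)"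
    by (intro integrable_const_bound[where B="C^2"]) auto
  then have "prob {\<omega>\<in>space M. \<eta> \<le> \<bar>?m \<omega>\<bar>} \<le> expectation (\<lambda>\<omega>. (?m \<omega>)^2) / \<eta>^2"
    using \<eta> by (intro second_moment_method) auto
  also have "expectation (\<lambda>\<omega>. (?m \<omega>)^2) = (1 / real n)^2 * expectation (\<lambda>\<omega>. (\<Sum>i\<in>{1..n}. c i \<omega>)^2)"
    by (simp only: power_mult_distrib integral_mult_right_zero)
  also have "\<dots> \<le> (1 / real n)^2 * (real n * C^2)"
    using integral_square_sum_indep_le[OF ind cm cb c0, of "{1..n}"] by (intro mult_left_mono) auto
  finally show ?thesis using n \<eta> by (simp add: field_simps power2_eq_square)
qed

lemma prob_abs_mean_bounded_deviation_ge_le: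
  fixes X :: "nat \<Rightarrow> 'a \<Rightarrow> 'b" and h :: "'b \<Rightarrow> real"
  assumes Xm: "\<And>i. X i \<in> measurable M S" and Xd: "\<And>i. distr M S (X i) = F"
    and ind: "indep_vars (\<lambda>_. S) X UNIV"
    and hm: "h \<in> borel_measurable S" and hb: "\<And>x. \<bar>h x\<bar> \<le> L" and n: "n \<ge> 1" and \<eta>: "\<eta> > 0"
  shows "prob {\<omega>\<in>space M. \<eta> \<le> \<bar>(1 / real n) * (\<Sum>i\<in>{1..n}. h (X i \<omega>)) - (\<integral>x. h x \<partial>F)\<bar>}
    \<le> (2 * L)^2 / (\<eta>^2 * real n)"
proof -
  note Xm[measurable] hm[measurable]
  interpret F: prob_space F using Xd[of 0] prob_space_distr[OF Xm[of 0]] by simp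
  have "h \<in> borel_measurable F" using hm measurable_cong_sets[of F S] Xd[of 0] by auto
  then have hi: "integrable F h" by (intro F.integrable_const_bound[where B=L]) (auto simp: hb)
  define mh where "mh = (\<integral>x. h x \<partial>F)"
  have "\<bar>mh\<bar> \<le> (\<integral>x. \<bar>h x\<bar> \<partial>F)" unfolding mh_def by (rule integral_abs_bound)
  also have "\<dots> \<le> (\<integral>x. L \<partial>F)" by (intro integral_mono) (use hi hb in auto)
  finally have "\<bar>mh\<bar> \<le> L" by (simp add: F.prob_space)
  define c where "c i \<omega> = h (X i \<omega>) - mh" for i \<omega>
  have [measurable]: "c i \<in> borel_measurable M" for i unfolding c_def by measurable
  have cb: "\<bar>c i \<omega>\<bar> \<le> 2 * L" for i \<omega> unfolding c_def using hb[of "X i \<omega>"] \<open>\<bar>mh\<bar> \<le> L\<close> by linarith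
  have c0: "expectation (c i) = 0" for i
  proof -
    have "integrable M (\<lambda>\<omega>. h (X i \<omega>))"
      by (rule integrable_const_bound[where B=L]) (use hb in auto)
    then show ?thesis
      unfolding c_def using integral_distr[OF Xm[of i] hm] Xd[of i] by (simp add: mh_def prob_space)
  qed
  have cind: "indep_vars (\<lambda>_. borel) c UNIV"
    unfolding c_def by (rule indep_vars_compose2[OF ind]) measurable
  have "(1 / real n) * (\<Sum>i\<in>{1..n}. h (X i \<omega>)) - mh = (1 / real n) * (\<Sum>i\<in>{1..n}. c i \<omega>)" for \<omega>
    using n by (simp add: c_def sum_subtractf field_simps)
  with prob_abs_mean_ge_le[OF cind _ cb c0 n \<eta>] show ?thesis by (simp add: mh_def)
qed

lemma prob_mean_ge_le:
  fixes X :: "nat \<Rightarrow> 'a \<Rightarrow> 'b" and e :: "'b \<Rightarrow> real"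
  assumes Xm: "\<And>i. X i \<in> measurable M S" and Xd: "\<And>i. distr M S (X i) = F"
    and em: "e \<in> borel_measurable S" and ei: "integrable F e" and e0: "\<And>x. 0 \<le> e x"
    and n: "n \<ge> 1" and \<eta>: "\<eta> > 0"
  shows "prob {\<omega>\<in>space M. \<eta> \<le> (1 / real n) * (\<Sum>i\<in>{1..n}. e (X i \<omega>))} \<le> (\<integral>x. e x \<partial>F) / \<eta>"
proof -
  have eX: "integrable M (\<lambda>\<omega>. e (X i \<omega>))" for i
    using ei Xd[of i] integrable_distr_eq[OF Xm[of i] em] by simp
  have "prob {\<omega>\<in>space M. \<eta> \<le> (1 / real n) * (\<Sum>i\<in>{1..n}. e (X i \<omega>))}
      \<le> expectation (\<lambda>\<omega>. (1 / real n) * (\<Sum>i\<in>{1..n}. e (X i \<omega>))) / \<eta>"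
    by (rule integral_Markov_inequality_measure[where A="space M"])
      (use \<eta> eX e0 in \<open>auto intro!: AE_I2 divide_nonneg_nonneg sum_nonneg\<close>)
  also have "expectation (\<lambda>\<omega>. (1 / real n) * (\<Sum>i\<in>{1..n}. e (X i \<omega>))) = (\<integral>x. e x \<partial>F)"
    using n integral_distr[OF Xm em] Xd by (simp add: integral_sum eX)
  finally show ?thesis .
qed

lemma prob_mean_deviation_ge_le:
  fixes X :: "nat \<Rightarrow> 'a \<Rightarrow> 'b" and g h :: "'b \<Rightarrow> real"
  assumes Xm: "\<And>i. X i \<in> measurable M S" and Xd: "\<And>i. distr M S (X i) = F"
    and ind: "indep_vars (\<lambda>_. S) X UNIV"
    and gm: "g \<in> borel_measurable S" and gi: "integrable F g"
    and hm: "h \<in> borel_measurable S" and hb: "\<And>x. \<bar>h x\<bar> \<le> L"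
    and close: "(\<integral>x. \<bar>g x - h x\<bar> \<partial>F) < \<eta> / 3" and n: "n \<ge> 1"
  shows "prob {\<omega>\<in>space M. \<eta> \<le> \<bar>(1 / real n) * (\<Sum>i\<in>{1..n}. g (X i \<omega>)) - (\<integral>x. g x \<partial>F)\<bar>}
    \<le> (\<integral>x. \<bar>g x - h x\<bar> \<partial>F) / (\<eta> / 3) + (2 * L)^2 / ((\<eta> / 3)^2 * real n)"
proof -
  note Xm[measurable] gm[measurable] hm[measurable]
  have "0 \<le> (\<integral>x. \<bar>g x - h x\<bar> \<partial>F)" by (intro integral_nonneg_AE) auto
  then have \<eta>: "\<eta> > 0" using close by linarith
  interpret F: prob_space F using Xd[of 0] prob_space_distr[OF Xm[of 0]] by simp
  have "h \<in> borel_measurable F" using hm measurable_cong_sets[of F S] Xd[of 0] by auto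
  then have hi: "integrable F h" by (intro F.integrable_const_bound[where B=L]) (auto simp: hb)
  text \<open>The tail \<open>g - h\<close> is controlled by Markov's inequality, the bounded part \<open>h\<close> by
    Chebyshev's.\<close>
  let ?A1 = "{\<omega>\<in>space M. \<eta> / 3 \<le> (1 / real n) * (\<Sum>i\<in>{1..n}. \<bar>g (X i \<omega>) - h (X i \<omega>)\<bar>)}"
  let ?A2 = "{\<omega>\<in>space M. \<eta> / 3 \<le> \<bar>(1 / real n) * (\<Sum>i\<in>{1..n}. h (X i \<omega>)) - (\<integral>x. h x \<partial>F)\<bar>}"
  have "{\<omega>\<in>space M. \<eta> \<le> \<bar>(1 / real n) * (\<Sum>i\<in>{1..n}. g (X i \<omega>)) - (\<integral>x. g x \<partial>F)\<bar>} \<subseteq> ?A1 \<union> ?A2"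
  proof
    fix \<omega> assume "\<omega> \<in> {\<omega>\<in>space M. \<eta> \<le> \<bar>(1 / real n) * (\<Sum>i\<in>{1..n}. g (X i \<omega>)) - (\<integral>x. g x \<partial>F)\<bar>}"
    then have \<omega>: "\<omega> \<in> space M"
      and big: "\<eta> \<le> \<bar>(1 / real n) * (\<Sum>i\<in>{1..n}. g (X i \<omega>)) - (\<integral>x. g x \<partial>F)\<bar>" by auto
    have "(1 / real n) * (\<Sum>i\<in>{1..n}. g (X i \<omega>)) - (\<integral>x. g x \<partial>F)
      = (1 / real n) * (\<Sum>i\<in>{1..n}. g (X i \<omega>) - h (X i \<omega>)) - (\<integral>x. g x - h x \<partial>F)
        + ((1 / real n) * (\<Sum>i\<in>{1..n}. h (X i \<omega>)) - (\<integral>x. h x \<partial>F))"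
      using gi hi by (simp add: sum_subtractf algebra_simps)
    with big have "\<eta> \<le> \<bar>(1 / real n) * (\<Sum>i\<in>{1..n}. g (X i \<omega>) - h (X i \<omega>)) - (\<integral>x. g x - h x \<partial>F)
        + ((1 / real n) * (\<Sum>i\<in>{1..n}. h (X i \<omega>)) - (\<integral>x. h x \<partial>F))\<bar>"
      by (simp only:)
    moreover have "\<bar>(1 / real n) * (\<Sum>i\<in>{1..n}. g (X i \<omega>) - h (X i \<omega>))\<bar>
        \<le> (1 / real n) * (\<Sum>i\<in>{1..n}. \<bar>g (X i \<omega>) - h (X i \<omega>)\<bar>)"
      by (simp add: abs_mult divide_right_mono sum_abs)
    moreover have "\<bar>\<integral>x. g x - h x \<partial>F\<bar> < \<eta> / 3"
      using integral_abs_bound[of F "\<lambda>x. g x - h x"] close by linarith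
    moreover have "\<eta> / 3 \<le> s \<or> \<eta> / 3 \<le> \<bar>r\<bar>"
      if "\<eta> \<le> \<bar>a - b + r\<bar>" "\<bar>a\<bar> \<le> s" "\<bar>b\<bar> < \<eta> / 3" for a b r s :: real
      using that by linarith
    ultimately show "\<omega> \<in> ?A1 \<union> ?A2" using \<omega> by blast
  qed
  then have "prob {\<omega>\<in>space M. \<eta> \<le> \<bar>(1 / real n) * (\<Sum>i\<in>{1..n}. g (X i \<omega>)) - (\<integral>x. g x \<partial>F)\<bar>}
      \<le> prob ?A1 + prob ?A2"
    by (intro order_trans[OF finite_measure_mono measure_Un_le]) auto
  also have "prob ?A1 \<le> (\<integral>x. \<bar>g x - h x\<bar> \<partial>F) / (\<eta> / 3)"
    using \<eta> n gi hi by (intro prob_mean_ge_le[OF Xm Xd]) auto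
  also have "prob ?A2 \<le> (2 * L)^2 / ((\<eta> / 3)^2 * real n)"
    using \<eta> n by (intro prob_abs_mean_bounded_deviation_ge_le[OF Xm Xd ind hm hb]) auto
  finally show ?thesis by simp
qed

lemma vanishes_in_prob_mean_real:
  fixes X :: "nat \<Rightarrow> 'a \<Rightarrow> 'b" and g :: "'b \<Rightarrow> real"
  assumes Xm: "\<And>i. X i \<in> measurable M S" and Xd: "\<And>i. distr M S (X i) = F"
    and ind: "indep_vars (\<lambda>_. S) X UNIV"
    and gm: "g \<in> borel_measurable S" and gi: "integrable F g"
  shows "vanishes_in_prob M (\<lambda>n \<omega>. (1 / real n) * (\<Sum>i\<in>{1..n}. g (X i \<omega>)) - (\<integral>x. g x \<partial>F))"
  unfolding vanishes_in_prob_def real_norm_def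
proof (intro conjI allI impI)
  note Xm[measurable] gm[measurable]
  show "(\<lambda>\<omega>. (1 / real n) * (\<Sum>i\<in>{1..n}. g (X i \<omega>)) - (\<integral>x. g x \<partial>F)) \<in> borel_measurable M" for n
    by measurable
  fix \<eta> \<gamma> :: real assume \<eta>: "\<eta> > 0" and \<gamma>: "\<gamma> > 0"
  define h where "h L x = (if \<bar>g x\<bar> \<le> real L then g x else 0)" for L :: nat and x
  have "\<forall>\<^sub>F L in sequentially. (\<integral>x. \<bar>g x - h L x\<bar> \<partial>F) < min (\<eta> / 3) (\<eta> * \<gamma> / 6)"
    using \<eta> \<gamma> tendsto_integral_truncation[OF gi] unfolding h_def by (intro order_tendstoD) auto
  then obtain L where L: "(\<integral>x. \<bar>g x - h L x\<bar> \<partial>F) < min (\<eta> / 3) (\<eta> * \<gamma> / 6)"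
    by (auto simp: eventually_sequentially)
  have "(\<lambda>n. (2 * real L)^2 / (\<eta> / 3)^2 / real n) \<longlonglongrightarrow> 0"
    by (rule lim_const_over_n)
  then have "\<forall>\<^sub>F n in sequentially. (2 * real L)^2 / (\<eta> / 3)^2 / real n < \<gamma> / 2"
    using \<gamma> by (intro order_tendstoD) auto
  then show "\<forall>\<^sub>F n in sequentially. prob {\<omega>\<in>space M.
      \<eta> \<le> \<bar>(1 / real n) * (\<Sum>i\<in>{1..n}. g (X i \<omega>)) - (\<integral>x. g x \<partial>F)\<bar>} \<le> \<gamma>"
    using eventually_ge_at_top[of 1]
  proof eventually_elim
    case (elim n)
    have "(\<integral>x. \<bar>g x - h L x\<bar> \<partial>F) / (\<eta> / 3) < \<gamma> / 2"
      using L \<eta> by (simp add: field_simps)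
    moreover have "(2 * real L)^2 / ((\<eta> / 3)^2 * real n) < \<gamma> / 2"
      using elim(1) by (simp only: divide_divide_eq_left)
    moreover have "prob {\<omega>\<in>space M. \<eta> \<le> \<bar>(1 / real n) * (\<Sum>i\<in>{1..n}. g (X i \<omega>)) - (\<integral>x. g x \<partial>F)\<bar>}
        \<le> (\<integral>x. \<bar>g x - h L x\<bar> \<partial>F) / (\<eta> / 3) + (2 * real L)^2 / ((\<eta> / 3)^2 * real n)"
      using L elim(2) by (intro prob_mean_deviation_ge_le[OF Xm Xd ind gm gi]) (auto simp: h_def)
    ultimately show ?case by linarith
  qed
qed

lemma vanishes_in_prob_euclidean:
  fixes R :: "nat \<Rightarrow> 'a \<Rightarrow> 'c::euclidean_space"
  assumes Rm: "\<And>n. R n \<in> borel_measurable M"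
    and coord: "\<And>b. b \<in> Basis \<Longrightarrow> vanishes_in_prob M (\<lambda>n \<omega>. R n \<omega> \<bullet> b)"
  shows "vanishes_in_prob M R"
  unfolding vanishes_in_prob_def
proof (intro conjI allI impI Rm)
  note Rm[measurable]
  fix e \<gamma> :: real assume e: "e > 0" and \<gamma>: "\<gamma> > 0"
  define K where "K = real DIM('c)"
  have K: "K > 0" by (simp add: K_def)
  define S where "S n b = {\<omega>\<in>space M. e / K \<le> norm (R n \<omega> \<bullet> b)}" for n b
  have "\<forall>b\<in>Basis. \<forall>\<^sub>F n in sequentially. prob (S n b) \<le> \<gamma> / K"
    using coord e \<gamma> K unfolding vanishes_in_prob_def S_def by (simp add: divide_pos_pos)
  then have "\<forall>\<^sub>F n in sequentially. \<forall>b\<in>Basis. prob (S n b) \<le> \<gamma> / K"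
    by (intro eventually_ball_finite) auto
  then show "\<forall>\<^sub>F n in sequentially. prob {\<omega>\<in>space M. e \<le> norm (R n \<omega>)} \<le> \<gamma>"
  proof eventually_elim
    case (elim n)
    have "{\<omega>\<in>space M. e \<le> norm (R n \<omega>)} \<subseteq> (\<Union>b\<in>Basis. S n b)"
    proof
      fix \<omega> assume \<omega>: "\<omega> \<in> {\<omega>\<in>space M. e \<le> norm (R n \<omega>)}"
      have "e \<le> (\<Sum>b\<in>Basis. \<bar>R n \<omega> \<bullet> b\<bar>)" using \<omega> norm_le_l1[of "R n \<omega>"] by auto
      then have "\<exists>b\<in>Basis. e / K \<le> \<bar>R n \<omega> \<bullet> b\<bar>"
        using sum_strict_mono[of Basis "\<lambda>b. \<bar>R n \<omega> \<bullet> b\<bar>" "\<lambda>_. e / K"] K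
        by (force simp: K_def not_le)
      then show "\<omega> \<in> (\<Union>b\<in>Basis. S n b)" using \<omega> by (auto simp: S_def)
    qed
    then have "prob {\<omega>\<in>space M. e \<le> norm (R n \<omega>)} \<le> (\<Sum>b\<in>Basis. prob (S n b))"
      by (intro order_trans[OF finite_measure_mono finite_measure_subadditive_finite])
        (auto simp: S_def)
    also have "\<dots> \<le> (\<Sum>b\<in>(Basis::'c set). \<gamma> / K)" using elim by (intro sum_mono) auto
    finally show ?case using K by (simp add: K_def)
  qed
qed

lemma bounded_in_prob_mean:
  fixes X :: "nat \<Rightarrow> 'a \<Rightarrow> 'b" and h :: "'b \<Rightarrow> real"
  assumes Xm: "\<And>i. X i \<in> measurable M S" and Xd: "\<And>i. distr M S (X i) = F"
    and hm: "h \<in> borel_measurable S" and hi: "integrable F h" and h0: "\<And>x. 0 \<le> h x"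
  shows "bounded_in_prob M (\<lambda>n \<omega>. (1 / real n) * (\<Sum>i\<in>{1..n}. h (X i \<omega>)))"
proof (rule bounded_in_prob_integral_le)
  have hX: "integrable M (\<lambda>\<omega>. h (X i \<omega>))" for i
    using hi Xd[of i] integrable_distr_eq[OF Xm[of i] hm] by simp
  show "integrable M (\<lambda>\<omega>. (1 / real n) * (\<Sum>i\<in>{1..n}. h (X i \<omega>)))" for n
    using hX by simp
  show "0 \<le> (1 / real n) * (\<Sum>i\<in>{1..n}. h (X i \<omega>))" for n \<omega>
    using h0 by (simp add: sum_nonneg)
  have "expectation (\<lambda>\<omega>. h (X i \<omega>)) = (\<integral>x. h x \<partial>F)" for i
    using integral_distr[OF Xm[of i] hm] Xd[of i] by simp
  then show "expectation (\<lambda>\<omega>. (1 / real n) * (\<Sum>i\<in>{1..n}. h (X i \<omega>))) \<le> (\<integral>x. h x \<partial>F)" for n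
    using hX h0 by (cases "n = 0") (simp_all add: integral_sum integral_nonneg)
qed

lemma vanishes_in_prob_mean:
  fixes X :: "nat \<Rightarrow> 'a \<Rightarrow> 'b" and g :: "'b \<Rightarrow> 'c::euclidean_space"
  assumes Xm: "\<And>i. X i \<in> measurable M S" and Xd: "\<And>i. distr M S (X i) = F"
    and ind: "indep_vars (\<lambda>_. S) X UNIV"
    and gm: "g \<in> borel_measurable S" and gi: "integrable F g"
  shows "vanishes_in_prob M (\<lambda>n \<omega>. (1 / real n) *\<^sub>R (\<Sum>i\<in>{1..n}. g (X i \<omega>)) - (\<integral>x. g x \<partial>F))"
proof (rule vanishes_in_prob_euclidean)
  note Xm[measurable] gm[measurable]
  show "(\<lambda>\<omega>. (1 / real n) *\<^sub>R (\<Sum>i\<in>{1..n}. g (X i \<omega>)) - (\<integral>x. g x \<partial>F)) \<in> borel_measurable M" for n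
    by measurable
  fix b :: 'c assume "b \<in> Basis"
  have "vanishes_in_prob M (\<lambda>n \<omega>. (1 / real n) * (\<Sum>i\<in>{1..n}. g (X i \<omega>) \<bullet> b) - (\<integral>x. g x \<bullet> b \<partial>F))"
    using gi by (intro vanishes_in_prob_mean_real[OF Xm Xd ind]) auto
  then show "vanishes_in_prob M (\<lambda>n \<omega>. ((1 / real n) *\<^sub>R (\<Sum>i\<in>{1..n}. g (X i \<omega>)) - (\<integral>x. g x \<partial>F)) \<bullet> b)"
    using gi by (simp add: inner_diff_left inner_sum_left)
qed

end

section \<open>The empirical spatial sign matrix at an estimated centre\<close>

lemma bounded_linear_kron_vec_I: "bounded_linear (kron_vec_I :: real^'p \<Rightarrow> _)"
  unfolding linear_conv_bounded_linear[symmetric]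
  by (rule linearI) (simp_all add: kron_vec_I_def vec_eq_iff algebra_simps)

lemma bounded_linear_kron_I_vec: "bounded_linear (kron_I_vec :: real^'p \<Rightarrow> _)"
  unfolding linear_conv_bounded_linear[symmetric]
  by (rule linearI) (simp_all add: kron_I_vec_def vec_eq_iff algebra_simps)

lemma borel_measurable_sign_outer[measurable]: "(sign_outer :: real^'n \<Rightarrow> _) \<in> borel_measurable borel"
proof -
  have "continuous_on UNIV (\<lambda>v::real^'n. outer v v)"
    unfolding outer_def by (intro continuous_intros)
  from borel_measurable_continuous_onI[OF this] borel_measurable_sgn
  show ?thesis unfolding sign_outer_def[abs_def] by (rule measurable_compose[rotated])
qed

lemma borel_measurable_colrow_kron_vec[measurable]:
  "(\<lambda>y::real^'n. colrow (kron_vec y y) y) \<in> borel_measurable borel"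
  unfolding colrow_def kron_vec_def by (intro borel_measurable_continuous_onI continuous_intros)

lemma borel_measurable_dsign_outer_mat[measurable]:
  "(dsign_outer_mat :: real^'p \<Rightarrow> _) \<in> borel_measurable borel"
proof -
  have [measurable]: "(kron_vec_I :: real^'p \<Rightarrow> _) \<in> borel_measurable borel"
    "(kron_I_vec :: real^'p \<Rightarrow> _) \<in> borel_measurable borel"
    by (intro borel_measurable_continuous_onI linear_continuous_on bounded_linear_kron_vec_I
        bounded_linear_kron_I_vec)+
  show ?thesis unfolding dsign_outer_mat_def[abs_def] by measurable
qed

lemma borel_measurable_vecm[measurable]: "(vecm :: real^'n^'m \<Rightarrow> _) \<in> borel_measurable borel"
  unfolding vecm_def by (intro borel_measurable_continuous_onI continuous_intros)

lemma borel_measurable_stack[measurable]: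
  assumes [measurable]: "f \<in> borel_measurable M" "g \<in> borel_measurable M"
  shows "(\<lambda>\<omega>. stack (f \<omega> :: real^'b::finite) (g \<omega> :: real^'c::finite)) \<in> borel_measurable M"
proof -
  have "bounded_linear (\<lambda>p :: (real^'b) \<times> (real^'c). stack (fst p) (snd p))"
    unfolding linear_conv_bounded_linear[symmetric]
    by (rule linearI) (simp_all add: stack_def vec_eq_iff split: sum.splits)
  then have "(\<lambda>p :: (real^'b) \<times> (real^'c). stack (fst p) (snd p)) \<in> borel_measurable borel"
    by (intro borel_measurable_continuous_onI linear_continuous_on)
  from measurable_compose[OF borel_measurable_Pair[OF assms] this] show ?thesis by simp
qed

lemma borel_measurable_matrix_vector_mult[measurable]:
  "((*v) (A :: real^'n^'m)) \<in> borel_measurable borel"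
  by (intro borel_measurable_continuous_onI linear_continuous_on matrix_vector_mul_bounded_linear)

lemma borel_measurable_S_emp[measurable]:
  assumes [measurable]: "\<And>i. X i \<in> borel_measurable M" "u \<in> borel_measurable M"
  shows "S_emp X n u \<in> borel_measurable M"
  unfolding S_emp_def[abs_def] by measurable

lemma integrable_norm_diff_powr_neg:
  fixes F :: "(real^'p) measure"
  assumes F: "sets F = sets borel"
    and fin: "(\<integral>\<^sup>+x. (if x = t then \<infinity> else ennreal (norm (x - t) powr (-3/2))) \<partial>F) < \<infinity>"
  shows "integrable F (\<lambda>x. norm (x - t) powr (-3/2))" and "AE x in F. x \<noteq> t"
proof -
  have [measurable_cong]: "sets F = sets borel" by (rule F)
  have "(\<integral>\<^sup>+x. ennreal (norm (norm (x - t) powr (-3/2))) \<partial>F)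
      \<le> (\<integral>\<^sup>+x. (if x = t then \<infinity> else ennreal (norm (x - t) powr (-3/2))) \<partial>F)"
    by (intro nn_integral_mono) auto
  with fin show "integrable F (\<lambda>x. norm (x - t) powr (-3/2))"
    by (intro integrableI_bounded) auto
  have "AE x in F. (if x = t then \<infinity> else ennreal (norm (x - t) powr (-3/2))) \<noteq> \<infinity>"
    using fin by (intro nn_integral_PInf_AE) auto
  then show "AE x in F. x \<noteq> t" by (rule AE_mp) (auto intro: AE_I2)
qed

lemma integrable_inverse_norm_diff:
  fixes F :: "(real^'p) measure"
  assumes "prob_space F" "sets F = sets borel" "integrable F (\<lambda>x. norm (x - t) powr (-3/2))"
  shows "integrable F (\<lambda>x. 1 / norm (x - t))"
proof (rule Bochner_Integration.integrable_bound)
  interpret prob_space F by fact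
  have [measurable_cong]: "sets F = sets borel" by fact
  show "integrable F (\<lambda>x. 1 + norm (x - t) powr (-3/2))" using assms(3) by simp
  have le: "1 / r \<le> 1 + r powr (-3/2)" if "r \<ge> 0" for r :: real
  proof (cases "r < 1")
    case True
    show ?thesis
    proof (cases "r = 0")
      case False
      with that True have "r powr (-1) \<le> r powr (-3/2)" by (intro powr_mono') auto
      then show ?thesis using False that by (simp add: powr_neg_one)
    qed simp
  next
    case False
    then have "1 / r \<le> 1" by simp
    then show ?thesis using powr_ge_zero[of r "-3/2"] by linarith
  qed
  show "AE x in F. norm (1 / norm (x - t)) \<le> norm (1 + norm (x - t) powr (-3/2))"
    using le by (intro AE_I2) (simp add: add_nonneg_nonneg)
  show "(\<lambda>x. 1 / norm (x - t)) \<in> borel_measurable F" by measurable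
qed

lemma integrable_dsign_outer_mat:
  fixes F :: "(real^'p) measure"
  assumes F: "sets F = sets borel" and inv: "integrable F (\<lambda>x. 1 / norm (x - t))"
  shows "integrable F (\<lambda>x. dsign_outer_mat (x - t))" and "B_mat F t = (\<integral>x. dsign_outer_mat (x - t) \<partial>F)"
proof -
  have [measurable_cong]: "sets F = sets borel" by (rule F)
  define P where "P y = (1 / norm y ^ 4) *\<^sub>R colrow (kron_vec y y) y" for y :: "real^'p"
  define v where "v y = (1 / norm y ^ 2) *\<^sub>R y" for y :: "real^'p"
  have "norm (P y) = 1 / norm y" for y
    by (cases "y = 0") (simp_all add: P_def norm_colrow norm_kron_vec power_eq_if field_simps)
  then have Pi: "integrable F (\<lambda>x. P (x - t))"
    by (intro Bochner_Integration.integrable_bound[OF inv]) (auto simp: P_def)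
  have "norm (v y) = 1 / norm y" for y
    by (cases "y = 0") (simp_all add: v_def power2_eq_square)
  then have vi: "integrable F (\<lambda>x. v (x - t))"
    by (intro Bochner_Integration.integrable_bound[OF inv]) (auto simp: v_def)
  have D: "dsign_outer_mat y = 2 *\<^sub>R P y - kron_vec_I (v y) - kron_I_vec (v y)" for y
    by (simp add: dsign_outer_mat_def P_def v_def)
  note lin = bounded_linear_kron_vec_I bounded_linear_kron_I_vec
  show "integrable F (\<lambda>x. dsign_outer_mat (x - t))"
    unfolding D using Pi integrable_bounded_linear[OF lin(1) vi] integrable_bounded_linear[OF lin(2) vi]
    by auto
  have "(\<integral>x. dsign_outer_mat (x - t) \<partial>F)
      = 2 *\<^sub>R (\<integral>x. P (x - t) \<partial>F) - kron_vec_I (\<integral>x. v (x - t) \<partial>F) - kron_I_vec (\<integral>x. v (x - t) \<partial>F)"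
    unfolding D using Pi integrable_bounded_linear[OF lin(1) vi] integrable_bounded_linear[OF lin(2) vi]
    by (simp add: integral_bounded_linear[OF lin(1) vi, symmetric]
        integral_bounded_linear[OF lin(2) vi, symmetric])
  then show "B_mat F t = (\<integral>x. dsign_outer_mat (x - t) \<partial>F)"
    by (simp only: B_mat_def P_def v_def)
qed

lemma sqrt_S_emp_diff_eq:
  fixes X :: "nat \<Rightarrow> 'a \<Rightarrow> real^'p" and u :: "'a \<Rightarrow> real^'p" and t :: "real^'p" and \<omega> :: 'a
  defines "d \<equiv> u \<omega> - t"
  shows "sqrt (real n) *\<^sub>R vecm (S_emp X n u \<omega> - S0)
      - A_mat B *v (sqrt (real n) *\<^sub>R stack d (vecm (S_emp X n (\<lambda>_. t) \<omega> - S0)))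
    = sqrt (real n) *\<^sub>R vecm ((1 / real n) *\<^sub>R (\<Sum>i\<in>{1..n}.
          sign_outer ((X i \<omega> - t) - d) - sign_outer (X i \<omega> - t) - dsign_outer (X i \<omega> - t) d))
      + ((1 / real n) *\<^sub>R (\<Sum>i\<in>{1..n}. dsign_outer_mat (X i \<omega> - t)) - B) *v (sqrt (real n) *\<^sub>R d)"
proof -
  have "S_emp X n u \<omega> - S_emp X n (\<lambda>_. t) \<omega>
      = (1 / real n) *\<^sub>R (\<Sum>i\<in>{1..n}.
          sign_outer ((X i \<omega> - t) - d) - sign_outer (X i \<omega> - t) - dsign_outer (X i \<omega> - t) d)
        + (1 / real n) *\<^sub>R (\<Sum>i\<in>{1..n}. dsign_outer (X i \<omega> - t) d)"
    by (simp add: S_emp_def d_def sum_subtractf[symmetric] scaleR_diff_right[symmetric]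
        scaleR_add_right[symmetric] sum.distrib[symmetric])
  moreover have "vecm ((1 / real n) *\<^sub>R (\<Sum>i\<in>{1..n}. dsign_outer (X i \<omega> - t) d))
      = ((1 / real n) *\<^sub>R (\<Sum>i\<in>{1..n}. dsign_outer_mat (X i \<omega> - t))) *v d"
    by (simp add: vecm_scaleR vecm_sum matrix_vector_mult_sum_left dsign_outer_mat_mult
        flip: scaleR_matrix_vector_assoc)
  ultimately show ?thesis
    by (simp add: A_mat_mult_stack vecm_diff vecm_add algebra_simps)
qed

lemma sqrt_mult_powr_eq:
  assumes "n > 0" "a \<ge> 0"
  shows "sqrt n * a powr (3/2) = n powr (-1/4) * (sqrt n * a) powr (3/2)"
proof -
  have "sqrt n powr (3/2) = (n powr (1/2)) powr (3/2)" using assms by (simp add: powr_half_sqrt)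
  also have "\<dots> = n powr (3/4)" by (simp add: powr_powr)
  finally have "(sqrt n * a) powr (3/2) = n powr (3/4) * a powr (3/2)"
    using assms by (simp add: powr_mult)
  moreover have "n powr (-1/4) * n powr (3/4) = sqrt n"
    using assms by (simp add: powr_add[symmetric] powr_half_sqrt)
  ultimately show ?thesis by (simp add: mult.assoc[symmetric])
qed

lemma norm_sqrt_mean_sign_outer_remainder_le:
  fixes y :: "nat \<Rightarrow> real^'p"
  assumes n: "n \<ge> 1" and y: "\<And>i. i \<in> {1..n} \<Longrightarrow> y i \<noteq> 0" and K: "sqrt (real n) * norm d \<le> K"
  shows "sqrt (real n) * norm ((1 / real n) *\<^sub>R (\<Sum>i\<in>{1..n}.
      sign_outer (y i - d) - sign_outer (y i) - dsign_outer (y i) d))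
    \<le> (16 * real n powr (-1/4)) * (K powr (3/2) * ((1 / real n) * (\<Sum>i\<in>{1..n}. norm (y i) powr (-3/2))))"
proof -
  have rem: "norm (sign_outer (y i - d) - sign_outer (y i) - dsign_outer (y i) d)
      \<le> 16 * (norm d powr (3/2) * norm (y i) powr (-3/2))" if "i \<in> {1..n}" for i
    using norm_sign_outer_remainder_le[OF y[OF that], of d] y[OF that]
    by (simp add: powr_divide powr_minus_divide)
  have "sqrt (real n) * norm d powr (3/2) = real n powr (-1/4) * (sqrt (real n) * norm d) powr (3/2)"
    using n by (intro sqrt_mult_powr_eq) auto
  also have "\<dots> \<le> real n powr (-1/4) * K powr (3/2)"
    using K by (intro mult_left_mono powr_mono2) auto
  finally have dK: "sqrt (real n) * norm d powr (3/2) \<le> real n powr (-1/4) * K powr (3/2)" .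
  have "norm (\<Sum>i\<in>{1..n}. sign_outer (y i - d) - sign_outer (y i) - dsign_outer (y i) d)
      \<le> (\<Sum>i\<in>{1..n}. 16 * (norm d powr (3/2) * norm (y i) powr (-3/2)))"
    by (rule order_trans[OF norm_sum sum_mono], rule rem)
  then have "norm ((1 / real n) *\<^sub>R (\<Sum>i\<in>{1..n}.
      sign_outer (y i - d) - sign_outer (y i) - dsign_outer (y i) d))
    \<le> (1 / real n) * (\<Sum>i\<in>{1..n}. 16 * (norm d powr (3/2) * norm (y i) powr (-3/2)))"
    by (simp add: divide_right_mono)
  then have "sqrt (real n) * norm ((1 / real n) *\<^sub>R (\<Sum>i\<in>{1..n}.
      sign_outer (y i - d) - sign_outer (y i) - dsign_outer (y i) d))
    \<le> sqrt (real n) * ((1 / real n) * (\<Sum>i\<in>{1..n}. 16 * (norm d powr (3/2) * norm (y i) powr (-3/2))))"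
    by (rule mult_left_mono) simp
  also have "\<dots> = 16 * (sqrt (real n) * norm d powr (3/2)) * ((1 / real n) * (\<Sum>i\<in>{1..n}. norm (y i) powr (-3/2)))"
    by (simp add: sum_distrib_left[symmetric] mult_ac)
  also have "\<dots> \<le> 16 * (real n powr (-1/4) * K powr (3/2)) * ((1 / real n) * (\<Sum>i\<in>{1..n}. norm (y i) powr (-3/2)))"
    using dK by (intro mult_right_mono mult_left_mono) (auto intro!: divide_nonneg_nonneg sum_nonneg)
  finally show ?thesis by (simp add: mult_ac)
qed

lemma norm_sqrt_S_emp_remainder_le:
  fixes X :: "nat \<Rightarrow> 'a \<Rightarrow> real^'p" and u :: "'a \<Rightarrow> real^'p" and t :: "real^'p" and \<omega> :: 'a
    and n :: nat and S0 :: "real^'p^'p"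
  defines "W \<equiv> sqrt (real n) *\<^sub>R stack (u \<omega> - t) (vecm (S_emp X n (\<lambda>_. t) \<omega> - S0))"
  assumes n: "n \<ge> 1" and nz: "\<And>i. i \<in> {1..n} \<Longrightarrow> X i \<omega> \<noteq> t"
  shows "norm (sqrt (real n) *\<^sub>R vecm (S_emp X n u \<omega> - S0) - A_mat B *v W)
    \<le> (16 * real n powr (-1/4)) * (norm W powr (3/2) * ((1 / real n) * (\<Sum>i\<in>{1..n}. norm (X i \<omega> - t) powr (-3/2))))
      + norm ((1 / real n) *\<^sub>R (\<Sum>i\<in>{1..n}. dsign_outer_mat (X i \<omega> - t)) - B) * norm W"
proof -
  define d where "d = u \<omega> - t"
  have "sqrt (real n) * norm d \<le> sqrt (real n) * norm (stack d (vecm (S_emp X n (\<lambda>_. t) \<omega> - S0)))"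
    by (intro mult_left_mono norm_le_norm_stack) simp
  then have dW: "sqrt (real n) * norm d \<le> norm W" by (simp add: W_def d_def)
  let ?rem = "(1 / real n) *\<^sub>R (\<Sum>i\<in>{1..n}.
    sign_outer ((X i \<omega> - t) - d) - sign_outer (X i \<omega> - t) - dsign_outer (X i \<omega> - t) d)"
  let ?D = "(1 / real n) *\<^sub>R (\<Sum>i\<in>{1..n}. dsign_outer_mat (X i \<omega> - t)) - B"
  have "norm (sqrt (real n) *\<^sub>R vecm (S_emp X n u \<omega> - S0) - A_mat B *v W)
      = norm (sqrt (real n) *\<^sub>R vecm ?rem + ?D *v (sqrt (real n) *\<^sub>R d))"
    unfolding W_def sqrt_S_emp_diff_eq d_def ..
  also have "\<dots> \<le> sqrt (real n) * norm ?rem + norm ?D * (sqrt (real n) * norm d)"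
    using norm_triangle_ineq[of "sqrt (real n) *\<^sub>R vecm ?rem" "?D *v (sqrt (real n) *\<^sub>R d)"]
      norm_matrix_vector_mult_le[of ?D "sqrt (real n) *\<^sub>R d"]
    by (simp add: norm_vecm)
  also have "\<dots> \<le> (16 * real n powr (-1/4)) * (norm W powr (3/2) * ((1 / real n) * (\<Sum>i\<in>{1..n}. norm (X i \<omega> - t) powr (-3/2))))
      + norm ((1 / real n) *\<^sub>R (\<Sum>i\<in>{1..n}. dsign_outer_mat (X i \<omega> - t)) - B) * norm W"
    using n nz dW by (intro add_mono norm_sqrt_mean_sign_outer_remainder_le mult_left_mono) auto
  finally show ?thesis .
qed

lemma (in prob_space) vanishes_in_prob_sqrt_S_emp_remainder:
  fixes X T :: "nat \<Rightarrow> 'a \<Rightarrow> real^'p" and F :: "(real^'p) measure" and t :: "real^'p"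
  defines "W \<equiv> \<lambda>n \<omega>. sqrt (real n) *\<^sub>R stack (T n \<omega> - t) (vecm (S_emp X n (\<lambda>_. t) \<omega> - S_pop F t))"
  assumes F: "prob_space F" "sets F = sets borel"
    and Xm: "\<And>i. X i \<in> borel_measurable M" and Xd: "\<And>i. distr M borel (X i) = F"
    and ind: "indep_vars (\<lambda>_. borel) X UNIV" and Tm: "\<And>n. T n \<in> borel_measurable M"
    and fin: "(\<integral>\<^sup>+x. (if x = t then \<infinity> else ennreal (norm (x - t) powr (-3/2))) \<partial>F) < \<infinity>"
    and W: "bounded_in_prob M W"
  shows "vanishes_in_prob M (\<lambda>n \<omega>. sqrt (real n) *\<^sub>R vecm (S_emp X n (T n) \<omega> - S_pop F t)
    - A_mat (B_mat F t) *v W n \<omega>)"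
proof -
  note [measurable] = Xm Tm
  have int_powr: "integrable F (\<lambda>x. norm (x - t) powr (-3/2))" and ne_t: "AE x in F. x \<noteq> t"
    using integrable_norm_diff_powr_neg[OF F(2) fin] by auto
  note int_D = integrable_dsign_outer_mat[OF F(2) integrable_inverse_norm_diff[OF F int_powr]]
  define V where "V = (\<lambda>n \<omega>. (1 / real n) * (\<Sum>i\<in>{1..n}. norm (X i \<omega> - t) powr (-3/2)))"
  define D where "D = (\<lambda>n \<omega>. (1 / real n) *\<^sub>R (\<Sum>i\<in>{1..n}. dsign_outer_mat (X i \<omega> - t)) - B_mat F t)"
  have V: "bounded_in_prob M V"
    unfolding V_def using int_powr by (intro bounded_in_prob_mean[OF Xm Xd]) auto
  have D: "vanishes_in_prob M D"
    using vanishes_in_prob_mean[OF Xm Xd ind _ int_D(1)] int_D(2) by (simp add: D_def)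
  have "(\<lambda>n. 16 * real n powr (-1/4)) \<longlonglongrightarrow> 0"
    by (intro tendsto_mult_right_zero tendsto_neg_powr filterlim_real_sequentially) simp
  then have small: "vanishes_in_prob M (\<lambda>n \<omega>. (16 * real n powr (-1/4)) * (norm (W n \<omega>) powr (3/2) * V n \<omega>)
      + norm (D n \<omega>) * norm (W n \<omega>))"
    using bounded_in_prob_norm_powr[OF W, of 1]
    by (intro vanishes_in_prob_add vanishes_in_prob_mult_bounded vanishes_in_prob_const
        bounded_in_prob_mult bounded_in_prob_norm_powr W V vanishes_in_prob_norm D) auto
  have "AE \<omega> in M. X i \<omega> \<noteq> t" for i
    using ne_t unfolding Xd[of i, symmetric] by (subst (asm) AE_distr_iff) auto
  then have ne: "AE \<omega> in M. \<forall>i. X i \<omega> \<noteq> t" by (simp add: AE_all_countable)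
  show ?thesis
  proof (rule vanishes_in_prob_dominated[OF _ small])
    show "(\<lambda>\<omega>. sqrt (real n) *\<^sub>R vecm (S_emp X n (T n) \<omega> - S_pop F t) - A_mat (B_mat F t) *v W n \<omega>)
      \<in> borel_measurable M" for n
      by (simp add: W_def)
    show "\<forall>\<^sub>F n in sequentially. AE \<omega> in M.
      norm (sqrt (real n) *\<^sub>R vecm (S_emp X n (T n) \<omega> - S_pop F t) - A_mat (B_mat F t) *v W n \<omega>)
      \<le> (16 * real n powr (-1/4)) * (norm (W n \<omega>) powr (3/2) * V n \<omega>) + norm (D n \<omega>) * norm (W n \<omega>)"
      using eventually_ge_at_top[of 1]
    proof eventually_elim
      case (elim n)
      from ne show ?case
        by eventually_elim
          (unfold W_def V_def D_def, rule norm_sqrt_S_emp_remainder_le, use elim in auto)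
    qed
  qed
qed

theorem theorem3:
  fixes M :: "'a measure" and F :: "(real^'p) measure"
    and X :: "nat \<Rightarrow> 'a \<Rightarrow> real^'p" and T :: "nat \<Rightarrow> 'a \<Rightarrow> real^'p"
    and t :: "real^'p" and \<Xi> :: "real^('p + ('p \<times> 'p))^('p + ('p \<times> 'p))"
  assumes p2: "CARD('p) \<ge> 2"
    and M: "prob_space M"
    and F: "prob_space F" "sets F = sets borel"
    and Xmeas: "\<And>i. X i \<in> borel_measurable M"
    and Xdistr: "\<And>i. distr M borel (X i) = F"
    and Xindep: "prob_space.indep_vars M (\<lambda>_. borel) X UNIV"
    and Tmeas: "\<And>n. T n \<in> borel_measurable M"
    and I: "\<exists>C::real. \<forall>\<^sub>F n in sequentially.
              (\<integral>\<^sup>+\<omega>. ennreal (norm (T n \<omega> - t) ^ 4) \<partial>M) \<le> ennreal (C / (real n)\<^sup>2)"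
    and II: "(\<integral>\<^sup>+x. (if x = t then \<infinity> else ennreal (norm (x - t) powr (-3/2))) \<partial>F) < \<infinity>"
    and Xi_sym: "transpose \<Xi> = \<Xi>"
    and III: "conv_distr_normal M
              (\<lambda>n \<omega>. sqrt (real n) *\<^sub>R stack (T n \<omega> - t)
                        (vecm (S_emp X n (\<lambda>_. t) \<omega> - S_pop F t))) \<Xi>"
  shows "conv_distr_normal M
           (\<lambda>n \<omega>. sqrt (real n) *\<^sub>R vecm (S_emp X n (T n) \<omega> - S_pop F t))
           (A_mat (B_mat F t) ** \<Xi> ** transpose (A_mat (B_mat F t)))"
proof -
  interpret prob_space M by (rule M)
  note [measurable] = Xmeas Tmeas
  define W where "W = (\<lambda>n \<omega>. sqrt (real n) *\<^sub>R stack (T n \<omega> - t) (vecm (S_emp X n (\<lambda>_. t) \<omega> - S_pop F t)))"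
  have conv: "conv_distr_normal M W \<Xi>" using III by (simp add: W_def)
  have "bounded_in_prob M W"
    by (rule bounded_in_prob_if_conv_distr_normal[OF _ conv]) (simp add: W_def)
  then have "vanishes_in_prob M (\<lambda>n \<omega>. sqrt (real n) *\<^sub>R vecm (S_emp X n (T n) \<omega> - S_pop F t)
      - A_mat (B_mat F t) *v W n \<omega>)"
    unfolding W_def by (rule vanishes_in_prob_sqrt_S_emp_remainder[OF F Xmeas Xdistr Xindep Tmeas II])
  from conv_distr_normal_add_vanishing[OF _ conv_distr_normal_linear_image[OF conv, of "A_mat (B_mat F t)"] this]
  show ?thesis by (simp add: W_def)
qed

end
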